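(* Let $H=(H,\Delta,\epsilon,\phi,S,\alpha,\beta)$ be a quasi-Hopf algebra over a field $k$, and let $K\subseteq H$ be a finite-dimensional subquasibialgebra (a subalgebra with $\Delta(K)\subseteq K\otimes K$ and $\phi\in K\otimes K\otimes K$) such that $$S(\phi^{(-1)})\alpha\phi^{(-2)}\otimes\phi^{(-3)}\in K\otimes K.$$ Then $\alpha,\beta\in K$ and $S(K)\subseteq K$, so $K$ is a quasi-Hopf subalgebra of $H$ (with quasi-antipode the restriction of $(S,\alpha,\beta)$).
   Context: A quasibialgebra $(H,\Delta,\epsilon,\phi)$ over a field $k$ consists of an algebra $H$, algebra maps $\Delta\colon H\to H\otimes H$, $h\mapsto h_{(1)}\otimes h_{(2)}$, and $\epsilon\colon H\to k$, and an invertible $\phi=\phi^{(1)}\otimes\phi^{(2)}\otimes\phi^{(3)}\in H^{\otimes 3}$ (with $\phi^{-1}=\phi^{(-1)}\otimes\phi^{(-2)}\otimes\phi^{(-3)}$) such that $(\epsilon\otimes H)\Delta(h)=h=(H\otimes\epsilon)\Delta(h)$; $(H\otimes\Delta)\Delta(h)\,\phi=\phi\,(\Delta\otimes H)\Delta(h)$; $(H\otimes H\otimes\Delta)(\phi)(\Delta\otimes H\otimes H)(\phi)=(1\otimes\phi)(H\otimes\Delta\otimes H)(\phi)(\phi\otimes 1)$; and $(H\otimes\epsilon\otimes H)(\phi)=1$. A quasi-antipode is a triple $(S,\alpha,\beta)$ with $\alpha,\beta\in H$ and $S$ an anti-algebra endomorphism of $H$ (not required to be bijective) such that for all $h\in H$: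 $S(h_{(1)})\alpha h_{(2)}=\epsilon(h)\alpha$, $h_{(1)}\beta S(h_{(2)})=\epsilon(h)\beta$, $\phi^{(1)}\beta S(\phi^{(2)})\alpha\phi^{(3)}=1$, $S(\phi^{(-1)})\alpha\phi^{(-2)}\beta S(\phi^{(-3)})=1$. A quasi-Hopf algebra is a quasibialgebra with a quasi-antipode. A quasi-Hopf subalgebra is a subquasibialgebra $K$ with $S(K)\subseteq K$ and $\alpha,\beta\in K$. *)

theory Defs
  imports "HOL-Library.Poly_Mapping"
begin

(* 
  The underlying vector space of the algebra H over the field 'k is
  presented by a basis indexed by the type 'b, i.e. H = ('b =>0 'k)
  (finitely supported coordinate functions).  Every vector space over a field has
  a basis, so this is no loss of generality.  Elements of the tensor powers
  H^(tensor n) are represented as ('b list =>0 'k), supported on words of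
  length n: the basis of H^(tensor n) is given by the elementary tensors
  e_(i1) (x) ... (x) e_(in), indexed by the word [i1,...,in].
 *)

type_synonym ('b,'k) hvec = "'b \<Rightarrow>\<^sub>0 'k"
type_synonym ('b,'k) tens = "'b list \<Rightarrow>\<^sub>0 'k"

definition sc :: "'k::field \<Rightarrow> ('c \<Rightarrow>\<^sub>0 'k) \<Rightarrow> ('c \<Rightarrow>\<^sub>0 'k)" where
  "sc c p = Poly_Mapping.map (\<lambda>x. c * x) p"

definition bv :: "'b \<Rightarrow> ('b,'k::field) hvec" where
  "bv i = Poly_Mapping.single i 1"

definition lin_ext :: "('b list \<Rightarrow> ('c \<Rightarrow>\<^sub>0 'k::field)) \<Rightarrow> ('b,'k) tens \<Rightarrow> ('c \<Rightarrow>\<^sub>0 'k)" where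
  "lin_ext g x = (\<Sum>u\<in>Poly_Mapping.keys x. sc (Poly_Mapping.lookup x u) (g u))"

definition vec :: "('b,'k::field) hvec \<Rightarrow> ('b,'k) tens" where
  "vec a = (\<Sum>i\<in>Poly_Mapping.keys a. Poly_Mapping.single [i] (Poly_Mapping.lookup a i))"

(* tensor product H^(tensor m) x H^(tensor n) \<rightarrow> H^(tensor (m+n)); k = H^(tensor 0) *)
definition tens :: "('b,'k::field) tens \<Rightarrow> ('b,'k) tens \<Rightarrow> ('b,'k) tens" where
  "tens x y = (\<Sum>u\<in>Poly_Mapping.keys x. \<Sum>v\<in>Poly_Mapping.keys y. Poly_Mapping.single (u @ v) (Poly_Mapping.lookup x u * Poly_Mapping.lookup y v))"

definition tunit :: "('b,'k::field) tens" where
  "tunit = Poly_Mapping.single [] 1"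

definition tprod :: "('b,'k::field) hvec list \<Rightarrow> ('b,'k) tens" where
  "tprod as = foldr (\<lambda>a t. tens (vec a) t) as tunit"

definition in_tpow :: "nat \<Rightarrow> ('b,'k::field) tens \<Rightarrow> bool" where
  "in_tpow n x \<longleftrightarrow> (\<forall>u\<in>Poly_Mapping.keys x. length u = n)"

(* componentwise multiplication in H^(tensor n) *)
definition mulT :: "(('b,'k::field) hvec \<Rightarrow> ('b,'k) hvec \<Rightarrow> ('b,'k) hvec)
    \<Rightarrow> ('b,'k) tens \<Rightarrow> ('b,'k) tens \<Rightarrow> ('b,'k) tens" where
  "mulT mult x y = lin_ext (\<lambda>u. lin_ext (\<lambda>v. tprod (map2 mult (map bv u) (map bv v))) y) x"

(* tensor product of linear maps f1 (x) ... (x) fn, fi : H \<rightarrow> H^(tensor mi) *)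
definition tmap :: "(('b,'k::field) hvec \<Rightarrow> ('b,'k) tens) list \<Rightarrow> ('b,'k) tens \<Rightarrow> ('b,'k) tens" where
  "tmap fs x = lin_ext (\<lambda>u. foldr tens (map2 (\<lambda>f i. f (bv i)) fs u) tunit) x"

definition lspan :: "('c \<Rightarrow>\<^sub>0 'k::field) set \<Rightarrow> ('c \<Rightarrow>\<^sub>0 'k) set" where
  "lspan F = {(\<Sum>i<m. sc (c i) (f i)) | (m::nat) c f. \<forall>i<m. f i \<in> F}"

definition tpow :: "('b,'k::field) hvec set \<Rightarrow> nat \<Rightarrow> ('b,'k) tens set" where
  "tpow K n = lspan {tprod as | as. set as \<subseteq> K \<and> length as = n}"

definition linear_map :: "(('b \<Rightarrow>\<^sub>0 'k::field) \<Rightarrow> ('c \<Rightarrow>\<^sub>0 'k)) \<Rightarrow> bool" where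
  "linear_map f \<longleftrightarrow> (\<forall>a b. f (a + b) = f a + f b) \<and> (\<forall>c a. f (sc c a) = sc c (f a))"

definition linear_functional :: "(('b \<Rightarrow>\<^sub>0 'k::field) \<Rightarrow> 'k) \<Rightarrow> bool" where
  "linear_functional f \<longleftrightarrow> (\<forall>a b. f (a + b) = f a + f b) \<and> (\<forall>c a. f (sc c a) = c * f a)"

definition k_algebra :: "(('b,'k::field) hvec \<Rightarrow> ('b,'k) hvec \<Rightarrow> ('b,'k) hvec) \<Rightarrow> ('b,'k) hvec \<Rightarrow> bool" where
  "k_algebra mult one \<longleftrightarrow>
     (\<forall>a. linear_map (mult a)) \<and> (\<forall>b. linear_map (\<lambda>a. mult a b)) \<and>
     (\<forall>a b c. mult (mult a b) c = mult a (mult b c)) \<and>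
     (\<forall>a. mult one a = a \<and> mult a one = a)"

definition quasibialgebra ::
  "(('b,'k::field) hvec \<Rightarrow> ('b,'k) hvec \<Rightarrow> ('b,'k) hvec) \<Rightarrow> ('b,'k) hvec
   \<Rightarrow> (('b,'k) hvec \<Rightarrow> ('b,'k) tens) \<Rightarrow> (('b,'k) hvec \<Rightarrow> 'k)
   \<Rightarrow> ('b,'k) tens \<Rightarrow> ('b,'k) tens \<Rightarrow> bool" where
  "quasibialgebra mult one Delta eps phi phinv \<longleftrightarrow>
     k_algebra mult one \<and>
     \<comment> \<open>Delta : H \<rightarrow> H (x) H is an algebra map\<close>
     linear_map Delta \<and> (\<forall>h. in_tpow 2 (Delta h)) \<and>
     (\<forall>a b. Delta (mult a b) = mulT mult (Delta a) (Delta b)) \<and>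
     Delta one = tprod [one, one] \<and>
     \<comment> \<open>eps : H \<rightarrow> k is an algebra map\<close>
     linear_functional eps \<and>
     (\<forall>a b. eps (mult a b) = eps a * eps b) \<and> eps one = 1 \<and>
     \<comment> \<open>phi invertible in H (x) H (x) H\<close>
     in_tpow 3 phi \<and> in_tpow 3 phinv \<and>
     mulT mult phi phinv = tprod [one, one, one] \<and>
     mulT mult phinv phi = tprod [one, one, one] \<and>
     \<comment> \<open>counit axioms\<close>
     (\<forall>h. tmap [\<lambda>a. Poly_Mapping.single [] (eps a), vec] (Delta h) = vec h) \<and>
     (\<forall>h. tmap [vec, \<lambda>a. Poly_Mapping.single [] (eps a)] (Delta h) = vec h) \<and>
     \<comment> \<open>quasi-coassociativity\<close>
     (\<forall>h. mulT mult (tmap [vec, Delta] (Delta h)) phi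
          = mulT mult phi (tmap [Delta, vec] (Delta h))) \<and>
     \<comment> \<open>pentagon axiom\<close>
     mulT mult (tmap [vec, vec, Delta] phi) (tmap [Delta, vec, vec] phi)
       = mulT mult (mulT mult (tens (vec one) phi) (tmap [vec, Delta, vec] phi))
                   (tens phi (vec one)) \<and>
     \<comment> \<open>normalisation\<close>
     tmap [vec, \<lambda>a. Poly_Mapping.single [] (eps a), vec] phi = tprod [one, one]"

definition quasi_antipode ::
  "(('b,'k::field) hvec \<Rightarrow> ('b,'k) hvec \<Rightarrow> ('b,'k) hvec) \<Rightarrow> ('b,'k) hvec
   \<Rightarrow> (('b,'k) hvec \<Rightarrow> ('b,'k) tens) \<Rightarrow> (('b,'k) hvec \<Rightarrow> 'k)
   \<Rightarrow> ('b,'k) tens \<Rightarrow> ('b,'k) tens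
   \<Rightarrow> (('b,'k) hvec \<Rightarrow> ('b,'k) hvec) \<Rightarrow> ('b,'k) hvec \<Rightarrow> ('b,'k) hvec \<Rightarrow> bool" where
  "quasi_antipode mult one Delta eps phi phinv S alpha beta \<longleftrightarrow>
     \<comment> \<open>S is an anti-algebra endomorphism\<close>
     linear_map S \<and> (\<forall>a b. S (mult a b) = mult (S b) (S a)) \<and> S one = one \<and>
     (\<forall>h. lin_ext (\<lambda>u. mult (mult (S (bv (u!0))) alpha) (bv (u!1))) (Delta h)
          = sc (eps h) alpha) \<and>
     (\<forall>h. lin_ext (\<lambda>u. mult (mult (bv (u!0)) beta) (S (bv (u!1)))) (Delta h)
          = sc (eps h) beta) \<and>
     lin_ext (\<lambda>u. mult (mult (mult (mult (bv (u!0)) beta) (S (bv (u!1)))) alpha) (bv (u!2))) phi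
       = one \<and>
     lin_ext (\<lambda>u. mult (mult (mult (mult (S (bv (u!0))) alpha) (bv (u!1))) beta) (S (bv (u!2)))) phinv
       = one"

definition quasi_hopf where
  "quasi_hopf mult one Delta eps phi phinv S alpha beta \<longleftrightarrow>
     quasibialgebra mult one Delta eps phi phinv \<and>
     quasi_antipode mult one Delta eps phi phinv S alpha beta"

definition subquasibialgebra where
  "subquasibialgebra mult one Delta phi K \<longleftrightarrow>
     0 \<in> K \<and> (\<forall>a\<in>K. \<forall>b\<in>K. a + b \<in> K) \<and> (\<forall>c. \<forall>a\<in>K. sc c a \<in> K) \<and>
     one \<in> K \<and> (\<forall>a\<in>K. \<forall>b\<in>K. mult a b \<in> K) \<and>
     (\<forall>a\<in>K. Delta a \<in> tpow K 2) \<and> phi \<in> tpow K 3"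

definition finite_dimensional :: "('c \<Rightarrow>\<^sub>0 'k::field) set \<Rightarrow> bool" where
  "finite_dimensional K \<longleftrightarrow> (\<exists>F. finite F \<and> K \<subseteq> lspan F)"

end

theory Submission
  imports Defs "HOL.Vector_Spaces"
begin

text \<open>
  Let \<open>q\<^sub>L = S(\<phi>\<^sup>-\<^sup>1) \<alpha> \<phi>\<^sup>-\<^sup>2 \<otimes> \<phi>\<^sup>-\<^sup>3\<close>, which lies in \<open>K \<otimes> K\<close> by hypothesis.
  The map \<open>can (x \<otimes> y) = (x \<otimes> 1) q\<^sub>L \<Delta>(y)\<close> sends \<open>K \<otimes> K\<close> into itself, and on all of
  \<open>H \<otimes> H\<close> it has the left inverse \<open>x \<otimes> y \<mapsto> x \<phi>\<^sup>1 \<beta> S(\<phi>\<^sup>2) S(y\<^sub>1) \<otimes> y\<^sub>2 \<phi>\<^sup>3\<close>: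
  by quasi-coassociativity this reduces to the identity
  \<open>q\<^sup>1 \<phi>\<^sup>1 \<beta> S(\<phi>\<^sup>2) S(q\<^sup>2\<^sub>1) \<otimes> q\<^sup>2\<^sub>2 \<phi>\<^sup>3 = 1 \<otimes> 1\<close>, a consequence of the pentagon axiom.
  As \<open>K \<otimes> K\<close> is finite-dimensional, the injective map \<open>can\<close> is onto \<open>K \<otimes> K\<close>, so the
  left inverse preserves \<open>K \<otimes> K\<close> as well.  Applying \<open>id \<otimes> \<epsilon>\<close> to \<open>q\<^sub>L\<close> and to the
  preimage of \<open>1 \<otimes> h\<close> gives \<open>\<alpha> \<in> K\<close> and \<open>\<beta> S(h) \<in> K\<close> for \<open>h \<in> K\<close>; in particular
  \<open>\<beta> \<in> K\<close>, and finally \<open>S(h) = q\<^sup>1 \<beta> S(h q\<^sup>2) \<in> K\<close>.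
\<close>

section \<open>Linear extension from a basis\<close>

lemma lookup_sc [simp]: "Poly_Mapping.lookup (sc c p) k = c * Poly_Mapping.lookup p k"
  unfolding sc_def by transfer (simp add: when_def)

lemma sc_add: "sc c (x + y) = sc c x + sc c y"
  by (simp add: poly_mapping_eq_iff fun_eq_iff lookup_add distrib_left)

lemma sc_add_left: "sc (a + b) x = sc a x + sc b x"
  by (simp add: poly_mapping_eq_iff fun_eq_iff lookup_add distrib_right)

lemma sc_sc [simp]: "sc a (sc b x) = sc (a * b) x"
  by (simp add: poly_mapping_eq_iff fun_eq_iff mult.assoc)

lemma sc_one [simp]: "sc 1 x = x"
  by (simp add: poly_mapping_eq_iff fun_eq_iff)

lemma sc_zero [simp]: "sc 0 x = 0" "sc c 0 = 0"
  by (simp_all add: poly_mapping_eq_iff fun_eq_iff)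

lemma sc_single [simp]: "sc c (Poly_Mapping.single k d) = Poly_Mapping.single k (c * d)"
  by (simp add: poly_mapping_eq_iff fun_eq_iff lookup_single when_def)

lemma sc_sum: "sc c (sum f A) = (\<Sum>a\<in>A. sc c (f a))"
  by (induction A rule: infinite_finite_induct) (auto simp: sc_add)

lemma keys_sc: "Poly_Mapping.keys (sc c x) \<subseteq> Poly_Mapping.keys x"
  by (auto simp: in_keys_iff)

lemma linear_mapI:
  "(\<And>a b. f (a + b) = f a + f b) \<Longrightarrow> (\<And>c a. f (sc c a) = sc c (f a)) \<Longrightarrow> linear_map f"
  by (simp add: linear_map_def)

lemma linear_map_add: "linear_map f \<Longrightarrow> f (a + b) = f a + f b"
  and linear_map_sc: "linear_map f \<Longrightarrow> f (sc c a) = sc c (f a)"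
  by (simp_all add: linear_map_def)

lemma linear_map_zero: "linear_map f \<Longrightarrow> f 0 = 0"
  using linear_map_sc[of f 0 0] by simp

lemma linear_map_sum: "linear_map f \<Longrightarrow> f (sum g A) = (\<Sum>a\<in>A. f (g a))"
  by (induction A rule: infinite_finite_induct) (auto simp: linear_map_zero linear_map_add)

lemma linear_map_comp: "linear_map f \<Longrightarrow> linear_map g \<Longrightarrow> linear_map (\<lambda>a. f (g a))"
  by (simp add: linear_map_def)

text \<open>\<^term>\<open>lin_ext\<close> with the index type generalised from words, so that it also applies to \<open>H\<close>.\<close>
definition lin_extend :: "('c \<Rightarrow> ('d \<Rightarrow>\<^sub>0 'k::field)) \<Rightarrow> ('c \<Rightarrow>\<^sub>0 'k) \<Rightarrow> ('d \<Rightarrow>\<^sub>0 'k)" where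
  "lin_extend g x = (\<Sum>u\<in>Poly_Mapping.keys x. sc (Poly_Mapping.lookup x u) (g u))"

lemma lin_ext_eq_lin_extend: "lin_ext = lin_extend"
  by (simp add: fun_eq_iff lin_ext_def lin_extend_def)

lemma lin_extend_superset:
  assumes "finite A" "Poly_Mapping.keys x \<subseteq> A"
  shows "lin_extend g x = (\<Sum>u\<in>A. sc (Poly_Mapping.lookup x u) (g u))"
  unfolding lin_extend_def
  by (rule sum.mono_neutral_left) (use assms in \<open>auto simp: in_keys_iff\<close>)

lemma lin_extend_add: "lin_extend g (x + y) = lin_extend g x + lin_extend g y"
proof -
  let ?A = "Poly_Mapping.keys x \<union> Poly_Mapping.keys y"
  have "lin_extend g (x + y) = (\<Sum>u\<in>?A. sc (Poly_Mapping.lookup (x + y) u) (g u))"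
    by (rule lin_extend_superset) (auto simp: keys_add)
  also have "\<dots> = (\<Sum>u\<in>?A. sc (Poly_Mapping.lookup x u) (g u)) + (\<Sum>u\<in>?A. sc (Poly_Mapping.lookup y u) (g u))"
    by (simp add: lookup_add sc_add_left sum.distrib)
  also have "\<dots> = lin_extend g x + lin_extend g y"
    by (subst (1 2) lin_extend_superset[of ?A]) auto
  finally show ?thesis .
qed

lemma lin_extend_sc: "lin_extend g (sc c x) = sc c (lin_extend g x)"
proof -
  have "lin_extend g (sc c x) = (\<Sum>u\<in>Poly_Mapping.keys x. sc (Poly_Mapping.lookup (sc c x) u) (g u))"
    by (rule lin_extend_superset) (auto simp: keys_sc[THEN subsetD])
  then show ?thesis by (simp add: lin_extend_def sc_sum)
qed

lemma linear_map_lin_extend: "linear_map (lin_extend g)"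
  by (simp add: linear_map_def lin_extend_add lin_extend_sc)

lemma lin_extend_zero [simp]: "lin_extend g 0 = 0"
  by (simp add: lin_extend_def)

lemma lin_extend_single [simp]: "lin_extend g (Poly_Mapping.single k c) = sc c (g k)"
  by (cases "c = 0") (simp_all add: lin_extend_def)

lemma lin_extend_bv [simp]: "lin_extend g (bv i) = g i"
  by (simp add: bv_def)

lemma lin_extend_cong:
  "(\<And>u. u \<in> Poly_Mapping.keys x \<Longrightarrow> g u = g' u) \<Longrightarrow> lin_extend g x = lin_extend g' x"
  by (simp add: lin_extend_def)

lemma lin_extend_fun_add: "lin_extend (\<lambda>u. g1 u + g2 u) x = lin_extend g1 x + lin_extend g2 x"
  by (simp add: lin_extend_def sc_add sum.distrib)

lemma lin_extend_fun_sc: "lin_extend (\<lambda>u. sc c (g u)) x = sc c (lin_extend g x)"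
  by (simp add: lin_extend_def sc_sum mult.commute)

lemma lin_extend_commute: "linear_map f \<Longrightarrow> f (lin_extend g x) = lin_extend (\<lambda>u. f (g u)) x"
  unfolding lin_extend_def by (simp add: linear_map_sum linear_map_sc)

lemma lin_extend_single_id: "lin_extend (\<lambda>u. Poly_Mapping.single u 1) x = x"
proof (rule poly_mapping_eqI)
  fix k
  have "Poly_Mapping.lookup (lin_extend (\<lambda>u. Poly_Mapping.single u 1) x) k
      = (\<Sum>u\<in>Poly_Mapping.keys x. (Poly_Mapping.lookup x u when u = k))"
    by (simp add: lin_extend_def lookup_sum lookup_single)
  also have "\<dots> = (\<Sum>u\<in>Poly_Mapping.keys x. if u = k then Poly_Mapping.lookup x u else 0)"
    by (rule sum.cong) (auto simp: when_def)
  also have "\<dots> = Poly_Mapping.lookup x k"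
    by (simp add: sum.delta in_keys_iff)
  finally show "Poly_Mapping.lookup (lin_extend (\<lambda>u. Poly_Mapping.single u 1) x) k = Poly_Mapping.lookup x k" .
qed

lemma lin_extend_linear_map: "linear_map f \<Longrightarrow> lin_extend (\<lambda>i. f (bv i)) a = f a"
  using lin_extend_commute[of f "\<lambda>u. Poly_Mapping.single u 1" a]
  by (simp add: lin_extend_single_id bv_def)

lemma lin_extend_swap:
  "lin_extend (\<lambda>u. lin_extend (\<lambda>v. g u v) y) x = lin_extend (\<lambda>v. lin_extend (\<lambda>u. g u v) x) y"
proof -
  have "lin_extend (\<lambda>u. lin_extend (\<lambda>v. g u v) y) x = (\<Sum>u\<in>Poly_Mapping.keys x. \<Sum>v\<in>Poly_Mapping.keys y.
      sc (Poly_Mapping.lookup x u * Poly_Mapping.lookup y v) (g u v))"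
    by (simp add: lin_extend_def sc_sum)
  also have "\<dots> = (\<Sum>v\<in>Poly_Mapping.keys y. \<Sum>u\<in>Poly_Mapping.keys x.
      sc (Poly_Mapping.lookup x u * Poly_Mapping.lookup y v) (g u v))"
    by (rule sum.swap)
  also have "\<dots> = lin_extend (\<lambda>v. lin_extend (\<lambda>u. g u v) x) y"
    by (simp add: lin_extend_def sc_sum mult.commute)
  finally show ?thesis .
qed

lemma linear_map_lin_extend_param:
  assumes "\<And>u. linear_map (\<lambda>a. G a u)"
  shows "linear_map (\<lambda>a. lin_extend (G a) t)"
proof (rule linear_mapI)
  fix a b c
  have "G (a + b) = (\<lambda>u. G a u + G b u)" by (rule ext) (rule linear_map_add[OF assms])
  then show "lin_extend (G (a + b)) t = lin_extend (G a) t + lin_extend (G b) t"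
    by (simp only: lin_extend_fun_add)
  have "G (sc c a) = (\<lambda>u. sc c (G a u))" by (rule ext) (rule linear_map_sc[OF assms])
  then show "lin_extend (G (sc c a)) t = sc c (lin_extend (G a) t)"
    by (simp only: lin_extend_fun_sc)
qed

lemma keys_lin_extend:
  "Poly_Mapping.keys (lin_extend g x) \<subseteq> (\<Union>u\<in>Poly_Mapping.keys x. Poly_Mapping.keys (g u))"
proof -
  have "Poly_Mapping.keys (lin_extend g x)
      \<subseteq> (\<Union>u\<in>Poly_Mapping.keys x. Poly_Mapping.keys (sc (Poly_Mapping.lookup x u) (g u)))"
    unfolding lin_extend_def by (rule keys_sum)
  also have "\<dots> \<subseteq> (\<Union>u\<in>Poly_Mapping.keys x. Poly_Mapping.keys (g u))"
    by (rule UN_mono) (auto intro: keys_sc[THEN subsetD])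
  finally show ?thesis .
qed

section \<open>Tensor powers and multilinear lifts\<close>

lemma tens_eq_lin_extend:
  "tens x y = lin_extend (\<lambda>u. lin_extend (\<lambda>v. Poly_Mapping.single (u @ v) 1) y) x"
  unfolding tens_def lin_extend_def by (simp add: sc_sum)

lemma vec_eq_lin_extend: "vec a = lin_extend (\<lambda>i. Poly_Mapping.single [i] 1) a"
  unfolding vec_def lin_extend_def by simp

lemma lin_extend_tens: "lin_extend g (tens x y) = lin_extend (\<lambda>u. lin_extend (\<lambda>v. g (u @ v)) y) x"
  by (simp add: tens_eq_lin_extend lin_extend_commute[OF linear_map_lin_extend])

lemma lin_extend_vec: "lin_extend g (vec a) = lin_extend (\<lambda>i. g [i]) a"
  by (simp add: vec_eq_lin_extend lin_extend_commute[OF linear_map_lin_extend])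

lemma lin_extend_tunit: "lin_extend g tunit = g []"
  by (simp add: tunit_def)

lemma tprod_Nil: "tprod [] = tunit"
  and tprod_Cons: "tprod (a # as) = tens (vec a) (tprod as)"
  by (simp_all add: tprod_def)

lemma tprod_map_bv: "tprod (map bv u) = Poly_Mapping.single u 1"
  by (induction u) (simp_all add: tprod_Nil tprod_Cons tunit_def vec_eq_lin_extend tens_eq_lin_extend)

lemma tmap_eq_lin_extend: "tmap fs x = lin_extend (\<lambda>u. foldr tens (map2 (\<lambda>f i. f (bv i)) fs u) tunit) x"
  by (simp add: tmap_def lin_ext_eq_lin_extend)

lemma linear_map_vec: "linear_map vec"
  unfolding vec_eq_lin_extend by (rule linear_map_lin_extend)

lemma linear_map_tens_left: "linear_map (\<lambda>x. tens x y)"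
  unfolding tens_eq_lin_extend by (rule linear_map_lin_extend)

lemma linear_map_tens_right: "linear_map (\<lambda>y. tens x y)"
  unfolding tens_eq_lin_extend by (intro linear_map_lin_extend_param linear_map_lin_extend)

lemma in_tpow_keys: "in_tpow n x \<Longrightarrow> u \<in> Poly_Mapping.keys x \<Longrightarrow> length u = n"
  unfolding in_tpow_def by blast

lemma in_tpow_zero: "in_tpow n 0"
  and in_tpow_add: "in_tpow n x \<Longrightarrow> in_tpow n y \<Longrightarrow> in_tpow n (x + y)"
  and in_tpow_sc: "in_tpow n x \<Longrightarrow> in_tpow n (sc c x)"
  unfolding in_tpow_def using keys_add[of x y] keys_sc[of c x] by auto

lemma in_tpow_lin_extend:
  assumes "\<And>u. u \<in> Poly_Mapping.keys x \<Longrightarrow> in_tpow n (g u)"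
  shows "in_tpow n (lin_extend g x)"
  using keys_lin_extend[of g x] assms unfolding in_tpow_def by blast

lemma in_tpow_single: "length u = n \<Longrightarrow> in_tpow n (Poly_Mapping.single u c)"
  unfolding in_tpow_def by (cases "c = 0") simp_all

lemma in_tpow_tens: "in_tpow n x \<Longrightarrow> in_tpow m y \<Longrightarrow> k = n + m \<Longrightarrow> in_tpow k (tens x y)"
  unfolding tens_eq_lin_extend
  by (intro in_tpow_lin_extend in_tpow_single) (simp add: in_tpow_keys)

lemma in_tpow_vec: "in_tpow 1 (vec a)"
  unfolding vec_eq_lin_extend by (intro in_tpow_lin_extend in_tpow_single) simp

lemma in_tpow_tunit: "in_tpow 0 tunit"
  unfolding tunit_def by (rule in_tpow_single) simp

lemma in_tpow_tprod: "length as = n \<Longrightarrow> in_tpow n (tprod as)"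
proof (induction as arbitrary: n)
  case Nil then show ?case by (simp add: tprod_Nil in_tpow_tunit)
next
  case (Cons a as)
  then show ?case by (auto simp: tprod_Cons intro: in_tpow_tens[OF in_tpow_vec])
qed

lemma in_tpow_tens_vec_left: "in_tpow 3 x \<Longrightarrow> in_tpow 4 (tens (vec a) x)"
  and in_tpow_tens_vec_right: "in_tpow 3 x \<Longrightarrow> in_tpow 4 (tens x (vec a))"
  by (auto intro: in_tpow_tens in_tpow_vec)

lemma in_tpow_tmap:
  assumes "in_tpow (length fs) x"
    and "\<And>u. length u = length fs \<Longrightarrow> in_tpow k (foldr tens (map2 (\<lambda>f i. f (bv i)) fs u) tunit)"
  shows "in_tpow k (tmap fs x)"
  unfolding tmap_eq_lin_extend using assms by (intro in_tpow_lin_extend) (simp add: in_tpow_keys)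

lemma length2_cases: "length u = 2 \<Longrightarrow> (\<And>a b. u = [a, b] \<Longrightarrow> P) \<Longrightarrow> P"
  and length3_cases: "length u = 3 \<Longrightarrow> (\<And>a b c. u = [a, b, c] \<Longrightarrow> P) \<Longrightarrow> P"
  and length4_cases: "length u = 4 \<Longrightarrow> (\<And>a b c d. u = [a, b, c, d] \<Longrightarrow> P) \<Longrightarrow> P"
  by (auto simp: numeral_eq_Suc length_Suc_conv)

named_theorems linear_map_intros

text \<open>
  \<open>tlift\<^sub>n F\<close> is the linear map on \<open>H\<^sup>\<otimes>\<^sup>n\<close> induced by an \<open>n\<close>-linear \<open>F\<close>, so that
  \<open>tlift2 F (\<Sum> a \<otimes> b) = \<Sum> F a b\<close>.  Every Sweedler-notation computation below is a
  computation with these lifts, and \<open>tlift_n F x\<close> for all \<open>n\<close>-linear \<open>F\<close> determines \<open>x\<close>.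
\<close>
definition tlift1 :: "(('b,'k::field) hvec \<Rightarrow> ('c \<Rightarrow>\<^sub>0 'k)) \<Rightarrow> ('b,'k) tens \<Rightarrow> ('c \<Rightarrow>\<^sub>0 'k)" where
  "tlift1 F = lin_extend (\<lambda>u. F (bv (u!0)))"

definition tlift2 :: "(('b,'k::field) hvec \<Rightarrow> ('b,'k) hvec \<Rightarrow> ('c \<Rightarrow>\<^sub>0 'k)) \<Rightarrow> ('b,'k) tens \<Rightarrow> ('c \<Rightarrow>\<^sub>0 'k)" where
  "tlift2 F = lin_extend (\<lambda>u. F (bv (u!0)) (bv (u!1)))"

definition tlift3 ::
  "(('b,'k::field) hvec \<Rightarrow> ('b,'k) hvec \<Rightarrow> ('b,'k) hvec \<Rightarrow> ('c \<Rightarrow>\<^sub>0 'k)) \<Rightarrow> ('b,'k) tens \<Rightarrow> ('c \<Rightarrow>\<^sub>0 'k)" where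
  "tlift3 F = lin_extend (\<lambda>u. F (bv (u!0)) (bv (u!1)) (bv (u!2)))"

definition tlift4 ::
  "(('b,'k::field) hvec \<Rightarrow> ('b,'k) hvec \<Rightarrow> ('b,'k) hvec \<Rightarrow> ('b,'k) hvec \<Rightarrow> ('c \<Rightarrow>\<^sub>0 'k))
    \<Rightarrow> ('b,'k) tens \<Rightarrow> ('c \<Rightarrow>\<^sub>0 'k)" where
  "tlift4 F = lin_extend (\<lambda>u. F (bv (u!0)) (bv (u!1)) (bv (u!2)) (bv (u!3)))"

definition bilin :: "(('b \<Rightarrow>\<^sub>0 'k::field) \<Rightarrow> ('b \<Rightarrow>\<^sub>0 'k) \<Rightarrow> ('c \<Rightarrow>\<^sub>0 'k)) \<Rightarrow> bool" where
  "bilin F \<longleftrightarrow> (\<forall>b. linear_map (\<lambda>a. F a b)) \<and> (\<forall>a. linear_map (\<lambda>b. F a b))"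

definition trilin :: "(('b \<Rightarrow>\<^sub>0 'k::field) \<Rightarrow> ('b \<Rightarrow>\<^sub>0 'k) \<Rightarrow> ('b \<Rightarrow>\<^sub>0 'k) \<Rightarrow> ('c \<Rightarrow>\<^sub>0 'k)) \<Rightarrow> bool" where
  "trilin F \<longleftrightarrow> (\<forall>b c. linear_map (\<lambda>a. F a b c)) \<and> (\<forall>a c. linear_map (\<lambda>b. F a b c))
     \<and> (\<forall>a b. linear_map (\<lambda>c. F a b c))"

definition quadlin ::
  "(('b \<Rightarrow>\<^sub>0 'k::field) \<Rightarrow> ('b \<Rightarrow>\<^sub>0 'k) \<Rightarrow> ('b \<Rightarrow>\<^sub>0 'k) \<Rightarrow> ('b \<Rightarrow>\<^sub>0 'k) \<Rightarrow> ('c \<Rightarrow>\<^sub>0 'k)) \<Rightarrow> bool" where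
  "quadlin F \<longleftrightarrow> (\<forall>b c d. linear_map (\<lambda>a. F a b c d)) \<and> (\<forall>a c d. linear_map (\<lambda>b. F a b c d))
     \<and> (\<forall>a b d. linear_map (\<lambda>c. F a b c d)) \<and> (\<forall>a b c. linear_map (\<lambda>d. F a b c d))"

lemma bilinI: "(\<And>b. linear_map (\<lambda>a. F a b)) \<Longrightarrow> (\<And>a. linear_map (\<lambda>b. F a b)) \<Longrightarrow> bilin F"
  by (simp add: bilin_def)

lemma trilinI:
  "(\<And>b c. linear_map (\<lambda>a. F a b c)) \<Longrightarrow> (\<And>a c. linear_map (\<lambda>b. F a b c))
    \<Longrightarrow> (\<And>a b. linear_map (\<lambda>c. F a b c)) \<Longrightarrow> trilin F"
  by (simp add: trilin_def)

lemma quadlinI: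
  "(\<And>b c d. linear_map (\<lambda>a. F a b c d)) \<Longrightarrow> (\<And>a c d. linear_map (\<lambda>b. F a b c d))
    \<Longrightarrow> (\<And>a b d. linear_map (\<lambda>c. F a b c d)) \<Longrightarrow> (\<And>a b c. linear_map (\<lambda>d. F a b c d)) \<Longrightarrow> quadlin F"
  by (simp add: quadlin_def)

lemma bilin_comp: "bilin F \<Longrightarrow> linear_map f \<Longrightarrow> linear_map (\<lambda>a. F (f a) y)"
    "bilin F \<Longrightarrow> linear_map f \<Longrightarrow> linear_map (\<lambda>a. F x (f a))"
  unfolding bilin_def by (auto intro: linear_map_comp[where f="\<lambda>a. F a y"] linear_map_comp[where f="\<lambda>a. F x a"])

lemma trilin_comp: "trilin F \<Longrightarrow> linear_map f \<Longrightarrow> linear_map (\<lambda>a. F (f a) y z)"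
    "trilin F \<Longrightarrow> linear_map f \<Longrightarrow> linear_map (\<lambda>a. F x (f a) z)"
    "trilin F \<Longrightarrow> linear_map f \<Longrightarrow> linear_map (\<lambda>a. F x y (f a))"
  unfolding trilin_def
  by (auto intro: linear_map_comp[where f="\<lambda>a. F a y z"] linear_map_comp[where f="\<lambda>a. F x a z"]
      linear_map_comp[where f="\<lambda>a. F x y a"])

lemma quadlin_comp: "quadlin F \<Longrightarrow> linear_map f \<Longrightarrow> linear_map (\<lambda>a. F (f a) y z w)"
    "quadlin F \<Longrightarrow> linear_map f \<Longrightarrow> linear_map (\<lambda>a. F x (f a) z w)"
    "quadlin F \<Longrightarrow> linear_map f \<Longrightarrow> linear_map (\<lambda>a. F x y (f a) w)"
    "quadlin F \<Longrightarrow> linear_map f \<Longrightarrow> linear_map (\<lambda>a. F x y z (f a))"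
  unfolding quadlin_def
  by (auto intro: linear_map_comp[where f="\<lambda>a. F a y z w"] linear_map_comp[where f="\<lambda>a. F x a z w"]
      linear_map_comp[where f="\<lambda>a. F x y a w"] linear_map_comp[where f="\<lambda>a. F x y z a"])

lemma lin_extend_eq_tlift2: "in_tpow 2 x \<Longrightarrow> (\<And>a b. g [a, b] = F (bv a) (bv b)) \<Longrightarrow> lin_extend g x = tlift2 F x"
  and lin_extend_eq_tlift3:
    "in_tpow 3 x \<Longrightarrow> (\<And>a b c. g [a, b, c] = F' (bv a) (bv b) (bv c)) \<Longrightarrow> lin_extend g x = tlift3 F' x"
  and lin_extend_eq_tlift4:
    "in_tpow 4 x \<Longrightarrow> (\<And>a b c d. g [a, b, c, d] = F'' (bv a) (bv b) (bv c) (bv d)) \<Longrightarrow> lin_extend g x = tlift4 F'' x"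
  unfolding tlift2_def tlift3_def tlift4_def
  by (auto intro!: lin_extend_cong elim!: length2_cases length3_cases length4_cases dest: in_tpow_keys)

lemma tlift1_vec: "linear_map F \<Longrightarrow> tlift1 F (vec a) = F a"
  unfolding tlift1_def by (simp add: lin_extend_vec lin_extend_linear_map)

lemma tlift2_tprod: "bilin F \<Longrightarrow> tlift2 F (tprod [a, b]) = F a b"
  unfolding tlift2_def
  by (simp only: tprod_Cons tprod_Nil lin_extend_tens lin_extend_vec lin_extend_tunit nth_Cons_0
      nth_Cons_Suc append_Cons append_Nil)
    (simp add: bilin_def lin_extend_linear_map[where f="\<lambda>x. F x b"] lin_extend_linear_map[where f="\<lambda>x. F _ x"])

lemma tlift3_tprod: "trilin F \<Longrightarrow> tlift3 F (tprod [a, b, c]) = F a b c"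
  unfolding tlift3_def
  by (simp only: tprod_Cons tprod_Nil lin_extend_tens lin_extend_vec lin_extend_tunit nth_Cons_0
      nth_Cons_Suc append_Cons append_Nil)
    (simp add: trilin_def lin_extend_linear_map[where f="\<lambda>x. F x b c"]
      lin_extend_linear_map[where f="\<lambda>x. F _ x c"] lin_extend_linear_map[where f="\<lambda>x. F _ _ x"])

lemma tlift4_tprod: "quadlin F \<Longrightarrow> tlift4 F (tprod [a, b, c, d]) = F a b c d"
  unfolding tlift4_def
  by (simp only: tprod_Cons tprod_Nil lin_extend_tens lin_extend_vec lin_extend_tunit nth_Cons_0
      nth_Cons_Suc append_Cons append_Nil)
    (simp add: quadlin_def lin_extend_linear_map[where f="\<lambda>x. F x b c d"]
      lin_extend_linear_map[where f="\<lambda>x. F _ x c d"] lin_extend_linear_map[where f="\<lambda>x. F _ _ x d"]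
      lin_extend_linear_map[where f="\<lambda>x. F _ _ _ x"])

lemma tlift2_tens_vec: "bilin F \<Longrightarrow> tlift2 F (tens (vec a) (vec b)) = F a b"
  unfolding tlift2_def
  by (simp only: lin_extend_tens lin_extend_vec nth_Cons_0 nth_Cons_Suc append_Cons append_Nil)
    (simp add: bilin_def lin_extend_linear_map[where f="\<lambda>x. F x b"] lin_extend_linear_map[where f="\<lambda>x. F _ x"])

lemma tlift1_lin_extend: "tlift1 F (lin_extend g x) = lin_extend (\<lambda>u. tlift1 F (g u)) x"
  and tlift2_lin_extend: "tlift2 F' (lin_extend g x) = lin_extend (\<lambda>u. tlift2 F' (g u)) x"
  and tlift3_lin_extend: "tlift3 F'' (lin_extend g x) = lin_extend (\<lambda>u. tlift3 F'' (g u)) x"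
  and tlift4_lin_extend: "tlift4 F''' (lin_extend g x) = lin_extend (\<lambda>u. tlift4 F''' (g u)) x"
  unfolding tlift1_def tlift2_def tlift3_def tlift4_def
  by (simp_all add: lin_extend_commute[OF linear_map_lin_extend])

lemma tlift2_commute: "linear_map f \<Longrightarrow> f (tlift2 G' t) = tlift2 (\<lambda>a b. f (G' a b)) t"
  and tlift3_commute: "linear_map f \<Longrightarrow> f (tlift3 G'' t) = tlift3 (\<lambda>a b c. f (G'' a b c)) t"
  unfolding tlift2_def tlift3_def by (simp_all add: lin_extend_commute)

lemma tlift1_sc_out: "tlift1 (\<lambda>a. sc c (G a)) t = sc c (tlift1 G t)"
  and tlift2_sc_out: "tlift2 (\<lambda>a b. sc c (G' a b)) t = sc c (tlift2 G' t)"
  and tlift3_sc_out: "tlift3 (\<lambda>a b c'. sc c (G'' a b c')) t = sc c (tlift3 G'' t)"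
  and tlift4_sc_out: "tlift4 (\<lambda>a b c' d. sc c (G''' a b c' d)) t = sc c (tlift4 G''' t)"
  unfolding tlift1_def tlift2_def tlift3_def tlift4_def by (simp_all only: lin_extend_fun_sc)

lemmas tlift_sc_out = tlift1_sc_out tlift2_sc_out tlift3_sc_out tlift4_sc_out

lemma tlift2_swap: "tlift2 (\<lambda>a b. tlift2 (\<lambda>x y. F a b x y) t2) t1 = tlift2 (\<lambda>x y. tlift2 (\<lambda>a b. F a b x y) t1) t2"
  and tlift3_swap:
    "tlift3 (\<lambda>a b c. tlift3 (\<lambda>x y z. F' a b c x y z) t2) t1 = tlift3 (\<lambda>x y z. tlift3 (\<lambda>a b c. F' a b c x y z) t1) t2"
  and tlift23_swap:
    "tlift2 (\<lambda>a b. tlift3 (\<lambda>x y z. F'' a b x y z) t2) t1 = tlift3 (\<lambda>x y z. tlift2 (\<lambda>a b. F'' a b x y z) t1) t2"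
  and tlift32_swap:
    "tlift3 (\<lambda>a b c. tlift2 (\<lambda>x y. F''' a b c x y) t2) t1 = tlift2 (\<lambda>x y. tlift3 (\<lambda>a b c. F''' a b c x y) t1) t2"
  unfolding tlift2_def tlift3_def by (rule lin_extend_swap)+

lemma linear_map_tlift1_comp: "linear_map f \<Longrightarrow> linear_map (\<lambda>a. tlift1 F (f a))"
  and linear_map_tlift2_comp: "linear_map f \<Longrightarrow> linear_map (\<lambda>a. tlift2 F' (f a))"
  and linear_map_tlift3_comp: "linear_map f \<Longrightarrow> linear_map (\<lambda>a. tlift3 F'' (f a))"
  and linear_map_tlift4_comp: "linear_map f \<Longrightarrow> linear_map (\<lambda>a. tlift4 F''' (f a))"
  unfolding tlift1_def tlift2_def tlift3_def tlift4_def
  by (simp_all add: linear_map_comp[OF linear_map_lin_extend])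

lemma linear_map_tlift1_param: "(\<And>x. linear_map (\<lambda>a. G a x)) \<Longrightarrow> linear_map (\<lambda>a. tlift1 (G a) t)"
  and linear_map_tlift2_param: "(\<And>x y. linear_map (\<lambda>a. G' a x y)) \<Longrightarrow> linear_map (\<lambda>a. tlift2 (G' a) t)"
  and linear_map_tlift3_param: "(\<And>x y z. linear_map (\<lambda>a. G'' a x y z)) \<Longrightarrow> linear_map (\<lambda>a. tlift3 (G'' a) t)"
  and linear_map_tlift4_param:
    "(\<And>x y z w. linear_map (\<lambda>a. G''' a x y z w)) \<Longrightarrow> linear_map (\<lambda>a. tlift4 (G''' a) t)"
  unfolding tlift1_def tlift2_def tlift3_def tlift4_def
  by (simp_all add: linear_map_lin_extend_param)

lemma linear_map_id: "linear_map (\<lambda>a. a)"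
  and linear_map_sc_comp: "linear_map f \<Longrightarrow> linear_map (\<lambda>a. sc c (f a))"
  and linear_map_add_comp: "linear_map f \<Longrightarrow> linear_map g \<Longrightarrow> linear_map (\<lambda>a. f a + g a)"
  unfolding linear_map_def by (simp_all add: sc_add add_ac mult.commute)

lemma linear_map_vec_comp: "linear_map f \<Longrightarrow> linear_map (\<lambda>a. vec (f a))"
  by (rule linear_map_comp[OF linear_map_vec])

lemma linear_map_tens_left_comp: "linear_map f \<Longrightarrow> linear_map (\<lambda>a. tens (f a) t)"
  and linear_map_tens_right_comp: "linear_map f \<Longrightarrow> linear_map (\<lambda>a. tens t (f a))"
  by (simp_all add: linear_map_comp[OF linear_map_tens_left] linear_map_comp[OF linear_map_tens_right])

lemma linear_map_tprod_head: "linear_map f \<Longrightarrow> linear_map (\<lambda>a. tprod (f a # l))"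
  unfolding tprod_Cons by (simp add: linear_map_tens_left_comp linear_map_vec_comp)

lemma linear_map_tprod_tail: "linear_map (\<lambda>a. tprod (L a)) \<Longrightarrow> linear_map (\<lambda>a. tprod (c # L a))"
  unfolding tprod_Cons by (rule linear_map_tens_right_comp)

declare linear_map_id [linear_map_intros] linear_map_sc_comp [linear_map_intros]
  linear_map_add_comp [linear_map_intros] linear_map_vec_comp [linear_map_intros]
  linear_map_tens_left_comp [linear_map_intros] linear_map_tens_right_comp [linear_map_intros]
  linear_map_tprod_head [linear_map_intros] linear_map_tprod_tail [linear_map_intros]
  linear_map_lin_extend_param [linear_map_intros]
  linear_map_tlift1_param [linear_map_intros] linear_map_tlift2_param [linear_map_intros]
  linear_map_tlift3_param [linear_map_intros] linear_map_tlift4_param [linear_map_intros]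
  linear_map_tlift1_comp [linear_map_intros] linear_map_tlift2_comp [linear_map_intros]
  linear_map_tlift3_comp [linear_map_intros] linear_map_tlift4_comp [linear_map_intros]

lemma in_tpow_tlift2: "(\<And>a b. in_tpow n (F a b)) \<Longrightarrow> in_tpow n (tlift2 F z)"
  and in_tpow_tlift3: "(\<And>a b c. in_tpow n (F' a b c)) \<Longrightarrow> in_tpow n (tlift3 F' z)"
  unfolding tlift2_def tlift3_def by (simp_all add: in_tpow_lin_extend)

lemma tlift2_tprod_id: "in_tpow 2 t \<Longrightarrow> tlift2 (\<lambda>a b. tprod [a, b]) t = t"
  using lin_extend_eq_tlift2[of t "\<lambda>u. Poly_Mapping.single u 1" "\<lambda>a b. tprod [a, b]"]
  by (simp add: lin_extend_single_id tprod_map_bv[of "[_, _]", simplified])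

lemma tlift4_tprod_id: "in_tpow 4 t \<Longrightarrow> tlift4 (\<lambda>a b c d. tprod [a, b, c, d]) t = t"
  using lin_extend_eq_tlift4[of t "\<lambda>u. Poly_Mapping.single u 1" "\<lambda>a b c d. tprod [a, b, c, d]"]
  by (simp add: lin_extend_single_id tprod_map_bv[of "[_, _, _, _]", simplified])

lemma bilin_tprod2: "bilin (\<lambda>a b. tprod [a, b])"
  by (intro bilinI) (simp_all add: linear_map_intros)

lemma quadlin_tprod4: "quadlin (\<lambda>a b c d. tprod [a, b, c, d])"
  by (intro quadlinI) (simp_all add: linear_map_intros)

lemma tensor2_eqI:
  fixes x y :: "('b, 'k::field) tens"
  assumes "in_tpow 2 x" "in_tpow 2 y"
    and "\<And>F :: ('b,'k) hvec \<Rightarrow> ('b,'k) hvec \<Rightarrow> ('b,'k) tens. bilin F \<Longrightarrow> tlift2 F x = tlift2 F y"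
  shows "x = y"
  using assms(3)[OF bilin_tprod2] by (simp add: tlift2_tprod_id assms(1,2))

lemma tensor4_eqI:
  fixes x y :: "('b, 'k::field) tens"
  assumes "in_tpow 4 x" "in_tpow 4 y"
    and "\<And>F :: ('b,'k) hvec \<Rightarrow> ('b,'k) hvec \<Rightarrow> ('b,'k) hvec \<Rightarrow> ('b,'k) hvec \<Rightarrow> ('b,'k) tens.
           quadlin F \<Longrightarrow> tlift4 F x = tlift4 F y"
  shows "x = y"
  using assms(3)[OF quadlin_tprod4] by (simp add: tlift4_tprod_id assms(1,2))

lemma tens_tunit: "tens x tunit = x"
  by (simp add: tens_eq_lin_extend tunit_def lin_extend_single_id)

lemmas lin_extend_tensor_simps = lin_extend_tens lin_extend_vec lin_extend_tunit numeral_2_eq_2 numeral_3_eq_3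

lemma tlift4_tens_vec_left:
  assumes "\<And>b c d. linear_map (\<lambda>a. F a b c d)"
  shows "tlift4 F (tens (vec a) x) = tlift3 (F a) x"
proof -
  have "tlift4 F (tens (vec a) x) = lin_extend (\<lambda>i. tlift3 (F (bv i)) x) a"
    by (simp add: tlift4_def tlift3_def lin_extend_tensor_simps)
  also have "\<dots> = tlift3 (F a) x"
    by (rule lin_extend_linear_map) (rule linear_map_tlift3_param, rule assms)
  finally show ?thesis .
qed

lemma tlift4_tens_vec_right:
  assumes "in_tpow 3 x" "\<And>a b c. linear_map (\<lambda>d. F a b c d)"
  shows "tlift4 F (tens x (vec d)) = tlift3 (\<lambda>a b c. F a b c d) x"
  unfolding tlift4_def lin_extend_tens lin_extend_vec
  by (rule lin_extend_eq_tlift3[OF assms(1)]) (simp add: lin_extend_linear_map[OF assms(2)])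

lemma mulT_eq_lin_extend:
  "mulT mult x y = lin_extend (\<lambda>u. lin_extend (\<lambda>v. tprod (map2 mult (map bv u) (map bv v))) y) x"
  by (simp add: mulT_def lin_ext_eq_lin_extend)

lemma linear_map_mulT_left_comp: "linear_map f \<Longrightarrow> linear_map (\<lambda>a. mulT mult (f a) t)"
  unfolding mulT_eq_lin_extend by (rule linear_map_comp[OF linear_map_lin_extend])

lemma linear_map_mulT_right_comp: "linear_map f \<Longrightarrow> linear_map (\<lambda>a. mulT mult t (f a))"
  unfolding mulT_eq_lin_extend
  by (rule linear_map_lin_extend_param, rule linear_map_comp[OF linear_map_lin_extend])

declare linear_map_mulT_left_comp [linear_map_intros] linear_map_mulT_right_comp [linear_map_intros]

lemma in_tpow_mulT: "in_tpow n x \<Longrightarrow> in_tpow n y \<Longrightarrow> in_tpow n (mulT mult x y)"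
  unfolding mulT_eq_lin_extend
  by (intro in_tpow_lin_extend in_tpow_tprod) (simp add: in_tpow_keys)

lemma tlift2_mulT:
  assumes "in_tpow 2 x" "in_tpow 2 y" "bilin F"
  shows "tlift2 F (mulT mult x y) = tlift2 (\<lambda>a b. tlift2 (\<lambda>a' b'. F (mult a a') (mult b b')) y) x"
  unfolding mulT_eq_lin_extend tlift2_lin_extend
  by (intro lin_extend_eq_tlift2 assms(1,2)) (simp add: tlift2_tprod[OF assms(3)])

lemma tlift3_mulT:
  assumes "in_tpow 3 x" "in_tpow 3 y" "trilin F"
  shows "tlift3 F (mulT mult x y)
    = tlift3 (\<lambda>a b c. tlift3 (\<lambda>a' b' c'. F (mult a a') (mult b b') (mult c c')) y) x"
  unfolding mulT_eq_lin_extend tlift3_lin_extend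
  by (intro lin_extend_eq_tlift3 assms(1,2)) (simp add: tlift3_tprod[OF assms(3)])

lemma tlift4_mulT:
  assumes "in_tpow 4 x" "in_tpow 4 y" "quadlin F"
  shows "tlift4 F (mulT mult x y)
    = tlift4 (\<lambda>a b c d. tlift4 (\<lambda>a' b' c' d'. F (mult a a') (mult b b') (mult c c') (mult d d')) y) x"
  unfolding mulT_eq_lin_extend tlift4_lin_extend
  by (intro lin_extend_eq_tlift4 assms(1,2)) (simp add: tlift4_tprod[OF assms(3)])

locale unital_algebra =
  fixes mult :: "('b,'k::field) hvec \<Rightarrow> ('b,'k) hvec \<Rightarrow> ('b,'k) hvec"
    and one :: "('b,'k) hvec"
  assumes algebra: "k_algebra mult one"
begin

lemma mult_linear_left: "linear_map (\<lambda>a. mult a b)"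
  and mult_linear_right: "linear_map (\<lambda>b. mult a b)"
  and mult_assoc: "mult (mult a b) c = mult a (mult b c)"
  and mult_one_left [simp]: "mult one a = a"
  and mult_one_right [simp]: "mult a one = a"
  using algebra by (simp_all add: k_algebra_def)

lemma linear_map_mult_left_comp: "linear_map f \<Longrightarrow> linear_map (\<lambda>a. mult (f a) c)"
  and linear_map_mult_right_comp: "linear_map f \<Longrightarrow> linear_map (\<lambda>a. mult c (f a))"
  using linear_map_comp[OF mult_linear_left] linear_map_comp[OF mult_linear_right] by blast+

declare linear_map_mult_left_comp [linear_map_intros] linear_map_mult_right_comp [linear_map_intros]

lemma quadlin_multiplied:
  assumes "quadlin F"
  shows "quadlin (\<lambda>a b c d. tlift4 (\<lambda>a' b' c' d'. F (mult a a') (mult b b') (mult c c') (mult d d')) y)"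
    and "quadlin (\<lambda>a' b' c' d'. F (mult a a') (mult b b') (mult c c') (mult d d'))"
  by (intro quadlinI;
      simp add: linear_map_intros quadlin_comp[OF assms])+

lemma mulT_assoc4:
  assumes x: "in_tpow 4 x" and y: "in_tpow 4 y" and z: "in_tpow 4 z"
  shows "mulT mult (mulT mult x y) z = mulT mult x (mulT mult y z)"
proof (rule tensor4_eqI)
  show "in_tpow 4 (mulT mult (mulT mult x y) z)" "in_tpow 4 (mulT mult x (mulT mult y z))"
    by (intro in_tpow_mulT x y z)+
  fix F :: "('b,'k) hvec \<Rightarrow> ('b,'k) hvec \<Rightarrow> ('b,'k) hvec \<Rightarrow> ('b,'k) hvec \<Rightarrow> ('b,'k) tens"
  assume "quadlin F"
  then show "tlift4 F (mulT mult (mulT mult x y) z) = tlift4 F (mulT mult x (mulT mult y z))"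
    by (simp add: tlift4_mulT in_tpow_mulT x y z quadlin_multiplied mult_assoc)
qed

lemma in_tpow_one4: "in_tpow 4 (tprod [one, one, one, one])"
  by (rule in_tpow_tprod) simp

lemma mulT_one4_left: "in_tpow 4 x \<Longrightarrow> mulT mult (tprod [one, one, one, one]) x = x"
  and mulT_one4_right: "in_tpow 4 x \<Longrightarrow> mulT mult x (tprod [one, one, one, one]) = x"
  by (rule tensor4_eqI; simp add: tlift4_mulT in_tpow_mulT in_tpow_one4 quadlin_multiplied tlift4_tprod)+

end

section \<open>Consequences of the quasi-Hopf axioms\<close>

locale quasi_hopf_algebra =
  fixes mult :: "('b,'k::field) hvec \<Rightarrow> ('b,'k) hvec \<Rightarrow> ('b,'k) hvec"
    and one :: "('b,'k) hvec"
    and Delta :: "('b,'k) hvec \<Rightarrow> ('b,'k) tens"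
    and eps :: "('b,'k) hvec \<Rightarrow> 'k"
    and phi phinv :: "('b,'k) tens"
    and S :: "('b,'k) hvec \<Rightarrow> ('b,'k) hvec"
    and alpha beta :: "('b,'k) hvec"
  assumes quasi_hopf: "quasi_hopf mult one Delta eps phi phinv S alpha beta"

sublocale quasi_hopf_algebra \<subseteq> unital_algebra mult one
  using quasi_hopf by unfold_locales (simp add: quasi_hopf_def quasibialgebra_def)

context quasi_hopf_algebra
begin

lemma Delta_linear: "linear_map Delta"
  and in_tpow_Delta: "in_tpow 2 (Delta h)"
  and Delta_mult: "Delta (mult a b) = mulT mult (Delta a) (Delta b)"
  and Delta_one: "Delta one = tprod [one, one]"
  and eps_linear: "linear_functional eps"
  and eps_mult: "eps (mult a b) = eps a * eps b"
  and eps_one: "eps one = 1"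
  and in_tpow_phi: "in_tpow 3 phi"
  and in_tpow_phinv: "in_tpow 3 phinv"
  and phi_phinv: "mulT mult phi phinv = tprod [one, one, one]"
  and phinv_phi: "mulT mult phinv phi = tprod [one, one, one]"
  and counit_left: "tmap [\<lambda>a. Poly_Mapping.single [] (eps a), vec] (Delta h) = vec h"
  and counit_right: "tmap [vec, \<lambda>a. Poly_Mapping.single [] (eps a)] (Delta h) = vec h"
  and quasi_coassoc: "mulT mult (tmap [vec, Delta] (Delta h)) phi = mulT mult phi (tmap [Delta, vec] (Delta h))"
  and pentagon: "mulT mult (tmap [vec, vec, Delta] phi) (tmap [Delta, vec, vec] phi)
       = mulT mult (mulT mult (tens (vec one) phi) (tmap [vec, Delta, vec] phi)) (tens phi (vec one))"
  and normalisation: "tmap [vec, \<lambda>a. Poly_Mapping.single [] (eps a), vec] phi = tprod [one, one]"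
  using quasi_hopf by (simp_all add: quasi_hopf_def quasibialgebra_def)

lemma S_linear: "linear_map S"
  and S_antimult: "S (mult a b) = mult (S b) (S a)"
  and S_one: "S one = one"
  and antipode_alpha: "lin_ext (\<lambda>u. mult (mult (S (bv (u!0))) alpha) (bv (u!1))) (Delta h) = sc (eps h) alpha"
  and antipode_beta: "lin_ext (\<lambda>u. mult (mult (bv (u!0)) beta) (S (bv (u!1)))) (Delta h) = sc (eps h) beta"
  and antipode_phinv:
    "lin_ext (\<lambda>u. mult (mult (mult (mult (S (bv (u!0))) alpha) (bv (u!1))) beta) (S (bv (u!2)))) phinv = one"
  using quasi_hopf by (simp_all add: quasi_hopf_def quasi_antipode_def)

lemma linear_map_S_comp [linear_map_intros]: "linear_map f \<Longrightarrow> linear_map (\<lambda>a. S (f a))"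
  by (rule linear_map_comp[OF S_linear])

lemma linear_map_Delta_comp [linear_map_intros]: "linear_map f \<Longrightarrow> linear_map (\<lambda>a. Delta (f a))"
  by (rule linear_map_comp[OF Delta_linear])

lemma linear_map_eps_sc_comp [linear_map_intros]: "linear_map f \<Longrightarrow> linear_map (\<lambda>a. sc (eps (f a)) v)"
  using eps_linear unfolding linear_map_def linear_functional_def by (simp add: sc_add_left)

lemma in_tpow_tmap_vec_Delta: "in_tpow 2 x \<Longrightarrow> in_tpow 3 (tmap [vec, Delta] x)"
  and in_tpow_tmap_Delta_vec: "in_tpow 2 x \<Longrightarrow> in_tpow 3 (tmap [Delta, vec] x)"
  and in_tpow_tmap_vec_vec_Delta: "in_tpow 3 x' \<Longrightarrow> in_tpow 4 (tmap [vec, vec, Delta] x')"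
  and in_tpow_tmap_Delta_vec_vec: "in_tpow 3 x' \<Longrightarrow> in_tpow 4 (tmap [Delta, vec, vec] x')"
  and in_tpow_tmap_vec_Delta_vec: "in_tpow 3 x' \<Longrightarrow> in_tpow 4 (tmap [vec, Delta, vec] x')"
  by (rule in_tpow_tmap;
      auto simp: numeral_eq_Suc length_Suc_conv tens_tunit intro!: in_tpow_tens in_tpow_vec in_tpow_Delta)+

lemma tlift3_tmap_vec_Delta:
  "in_tpow 2 x \<Longrightarrow> tlift3 F (tmap [vec, Delta] x) = tlift2 (\<lambda>a b. tlift2 (\<lambda>b1 b2. F a b1 b2) (Delta b)) x"
  unfolding tmap_eq_lin_extend tlift3_lin_extend
  by (rule lin_extend_eq_tlift2) (simp_all add: tlift3_def tlift2_def lin_extend_tensor_simps)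

lemma tlift3_tmap_Delta_vec:
  "in_tpow 2 x \<Longrightarrow> tlift3 F (tmap [Delta, vec] x) = tlift2 (\<lambda>a b. tlift2 (\<lambda>a1 a2. F a1 a2 b) (Delta a)) x"
  unfolding tmap_eq_lin_extend tlift3_lin_extend
  by (rule lin_extend_eq_tlift2, assumption)
    (simp add: tlift3_def lin_extend_tensor_simps, rule lin_extend_eq_tlift2[OF in_tpow_Delta],
      simp add: lin_extend_tensor_simps)

lemma tlift4_tmap_vec_vec_Delta:
  "in_tpow 3 x \<Longrightarrow> tlift4 F (tmap [vec, vec, Delta] x) = tlift3 (\<lambda>a b c. tlift2 (\<lambda>c1 c2. F a b c1 c2) (Delta c)) x"
  unfolding tmap_eq_lin_extend tlift4_lin_extend
  by (rule lin_extend_eq_tlift3) (simp_all add: tlift4_def tlift2_def lin_extend_tensor_simps)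

lemma tlift4_tmap_Delta_vec_vec:
  "in_tpow 3 x \<Longrightarrow> tlift4 F (tmap [Delta, vec, vec] x) = tlift3 (\<lambda>a b c. tlift2 (\<lambda>a1 a2. F a1 a2 b c) (Delta a)) x"
  unfolding tmap_eq_lin_extend tlift4_lin_extend
  by (rule lin_extend_eq_tlift3, assumption)
    (simp add: tlift4_def lin_extend_tensor_simps, rule lin_extend_eq_tlift2[OF in_tpow_Delta],
      simp add: lin_extend_tensor_simps)

lemma tlift4_tmap_vec_Delta_vec:
  "in_tpow 3 x \<Longrightarrow> tlift4 F (tmap [vec, Delta, vec] x) = tlift3 (\<lambda>a b c. tlift2 (\<lambda>b1 b2. F a b1 b2 c) (Delta b)) x"
  unfolding tmap_eq_lin_extend tlift4_lin_extend
  by (rule lin_extend_eq_tlift3, assumption)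
    (simp add: tlift4_def lin_extend_tensor_simps, rule lin_extend_eq_tlift2[OF in_tpow_Delta],
      simp add: lin_extend_tensor_simps)

lemma tlift1_tmap_eps_vec:
  "in_tpow 2 x \<Longrightarrow> tlift1 F (tmap [\<lambda>a. Poly_Mapping.single [] (eps a), vec] x) = tlift2 (\<lambda>a b. sc (eps a) (F b)) x"
  and tlift1_tmap_vec_eps:
  "in_tpow 2 x \<Longrightarrow> tlift1 F (tmap [vec, \<lambda>a. Poly_Mapping.single [] (eps a)] x) = tlift2 (\<lambda>a b. sc (eps b) (F a)) x"
  unfolding tmap_eq_lin_extend tlift1_lin_extend
  by (rule lin_extend_eq_tlift2; simp add: tlift1_def lin_extend_tensor_simps)+

lemma tlift2_tmap_vec_eps_vec:
  "in_tpow 3 x \<Longrightarrow> tlift2 F (tmap [vec, \<lambda>a. Poly_Mapping.single [] (eps a), vec] x) = tlift3 (\<lambda>a b c. sc (eps b) (F a c)) x"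
  unfolding tmap_eq_lin_extend tlift2_lin_extend
  by (rule lin_extend_eq_tlift3) (simp_all add: tlift2_def lin_extend_tensor_simps)

lemma counit_left_tlift: "linear_map L \<Longrightarrow> tlift2 (\<lambda>a b. sc (eps a) (L b)) (Delta h) = L h"
  using arg_cong[OF counit_left, of "tlift1 L" h]
  by (simp only: tlift1_tmap_eps_vec[OF in_tpow_Delta] tlift1_vec)

lemma counit_right_tlift: "linear_map L \<Longrightarrow> tlift2 (\<lambda>a b. sc (eps b) (L a)) (Delta h) = L h"
  using arg_cong[OF counit_right, of "tlift1 L" h]
  by (simp only: tlift1_tmap_vec_eps[OF in_tpow_Delta] tlift1_vec)

lemma normalisation_tlift: "bilin G \<Longrightarrow> tlift3 (\<lambda>a b c. sc (eps b) (G a c)) phi = G one one"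
  using arg_cong[OF normalisation, of "tlift2 G"]
  by (simp only: tlift2_tmap_vec_eps_vec[OF in_tpow_phi] tlift2_tprod)

lemma antipode_alpha_tlift:
  assumes "linear_map L"
  shows "tlift2 (\<lambda>a b. L (mult (mult (S a) alpha) b)) (Delta h) = sc (eps h) (L alpha)"
proof -
  have "tlift2 (\<lambda>a b. mult (mult (S a) alpha) b) (Delta h) = sc (eps h) alpha"
    using antipode_alpha by (simp only: lin_ext_eq_lin_extend tlift2_def)
  from arg_cong[OF this, of L] show ?thesis
    by (simp only: tlift2_commute[OF assms] linear_map_sc[OF assms])
qed

lemma antipode_beta_tlift:
  assumes "linear_map L"
  shows "tlift2 (\<lambda>a b. L (mult (mult a beta) (S b))) (Delta h) = sc (eps h) (L beta)"
proof -
  have "tlift2 (\<lambda>a b. mult (mult a beta) (S b)) (Delta h) = sc (eps h) beta"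
    using antipode_beta by (simp only: lin_ext_eq_lin_extend tlift2_def)
  from arg_cong[OF this, of L] show ?thesis
    by (simp only: tlift2_commute[OF assms] linear_map_sc[OF assms])
qed

lemma antipode_phinv_tlift:
  assumes "linear_map L"
  shows "tlift3 (\<lambda>a b c. L (mult (mult (mult (mult (S a) alpha) b) beta) (S c))) phinv = L one"
proof -
  have "tlift3 (\<lambda>a b c. mult (mult (mult (mult (S a) alpha) b) beta) (S c)) phinv = one"
    using antipode_phinv by (simp only: lin_ext_eq_lin_extend tlift3_def)
  from arg_cong[OF this, of L] show ?thesis
    by (simp only: tlift3_commute[OF assms])
qed

lemma phi_phinv_tlift:
  "trilin F \<Longrightarrow> tlift3 (\<lambda>a b c. tlift3 (\<lambda>a' b' c'. F (mult a a') (mult b b') (mult c c')) phinv) phi = F one one one"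
  using arg_cong[OF phi_phinv, of "tlift3 F"]
  by (simp only: tlift3_mulT[OF in_tpow_phi in_tpow_phinv] tlift3_tprod)

lemma phinv_phi_tlift:
  "trilin F \<Longrightarrow> tlift3 (\<lambda>a b c. tlift3 (\<lambda>a' b' c'. F (mult a a') (mult b b') (mult c c')) phi) phinv = F one one one"
  using arg_cong[OF phinv_phi, of "tlift3 F"]
  by (simp only: tlift3_mulT[OF in_tpow_phinv in_tpow_phi] tlift3_tprod)

lemma quasi_coassoc_tlift:
  "trilin F \<Longrightarrow>
    tlift2 (\<lambda>a b. tlift2 (\<lambda>b1 b2. tlift3 (\<lambda>p1 p2 p3. F (mult a p1) (mult b1 p2) (mult b2 p3)) phi) (Delta b)) (Delta h)
  = tlift3 (\<lambda>p1 p2 p3. tlift2 (\<lambda>a b. tlift2 (\<lambda>a1 a2. F (mult p1 a1) (mult p2 a2) (mult p3 b)) (Delta a)) (Delta h)) phi"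
  using arg_cong[OF quasi_coassoc, of "tlift3 F" h]
  by (simp only: tlift3_mulT[OF in_tpow_tmap_vec_Delta[OF in_tpow_Delta] in_tpow_phi]
      tlift3_mulT[OF in_tpow_phi in_tpow_tmap_Delta_vec[OF in_tpow_Delta]]
      tlift3_tmap_vec_Delta[OF in_tpow_Delta] tlift3_tmap_Delta_vec[OF in_tpow_Delta])

lemma pentagon_tlift:
  assumes q: "quadlin Q"
  shows "tlift3 (\<lambda>p1 p2 p3. tlift2 (\<lambda>c1 c2. tlift3 (\<lambda>r1 r2 r3. tlift2 (\<lambda>a1 a2.
      Q (mult p1 a1) (mult p2 a2) (mult c1 r2) (mult c2 r3)) (Delta r1)) phi) (Delta p3)) phi
   = tlift3 (\<lambda>e1 e2 e3. tlift3 (\<lambda>d1 d2 d3. tlift2 (\<lambda>m1 m2. tlift3 (\<lambda>f1 f2 f3.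
      Q (mult (mult one d1) f1) (mult (mult e1 m1) f2) (mult (mult e2 m2) f3) (mult (mult e3 d3) one)) phi) (Delta d2)) phi) phi"
    (is "?lhs = ?rhs")
proof -
  let ?A = "tmap [vec, vec, Delta] phi" and ?B = "tmap [Delta, vec, vec] phi" and ?E1 = "tens (vec one) phi"
    and ?D = "tmap [vec, Delta, vec] phi" and ?E2 = "tens phi (vec one)"
  define T where "T = (\<lambda>a b c d. tlift4 (\<lambda>a' b' c' d'. Q (mult a a') (mult b b') (mult c c') (mult d d')) ?E2)"
  have qT: "quadlin T"
    unfolding T_def by (rule quadlin_multiplied(1)[OF q])
  have E2: "tlift4 (\<lambda>a' b' c' d'. Q (mult x a') (mult y b') (mult z c') (mult w d')) ?E2
      = tlift3 (\<lambda>f1 f2 f3. Q (mult x f1) (mult y f2) (mult z f3) (mult w one)) phi" for x y z w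
    by (rule tlift4_tens_vec_right[OF in_tpow_phi]) (simp add: linear_map_intros quadlin_comp(4)[OF q])
  have "?lhs = tlift4 Q (mulT mult ?A ?B)"
    by (simp only: tlift4_mulT[OF in_tpow_tmap_vec_vec_Delta[OF in_tpow_phi] in_tpow_tmap_Delta_vec_vec[OF in_tpow_phi] q]
        tlift4_tmap_vec_vec_Delta[OF in_tpow_phi] tlift4_tmap_Delta_vec_vec[OF in_tpow_phi])
  also have "\<dots> = tlift4 Q (mulT mult (mulT mult ?E1 ?D) ?E2)"
    by (simp only: pentagon)
  also have "\<dots> = tlift4 T (mulT mult ?E1 ?D)"
    unfolding T_def
    by (rule tlift4_mulT[OF in_tpow_mulT[OF in_tpow_tens_vec_left[OF in_tpow_phi] in_tpow_tmap_vec_Delta_vec[OF in_tpow_phi]]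
          in_tpow_tens_vec_right[OF in_tpow_phi] q])
  also have "\<dots> = tlift4 (\<lambda>a b c d. tlift4 (\<lambda>a' b' c' d'. T (mult a a') (mult b b') (mult c c') (mult d d')) ?D) ?E1"
    by (rule tlift4_mulT[OF in_tpow_tens_vec_left[OF in_tpow_phi] in_tpow_tmap_vec_Delta_vec[OF in_tpow_phi] qT])
  also have "\<dots> = tlift3 (\<lambda>e1 e2 e3. tlift4 (\<lambda>a' b' c' d'. T (mult one a') (mult e1 b') (mult e2 c') (mult e3 d')) ?D) phi"
    by (rule tlift4_tens_vec_left) (simp add: linear_map_intros quadlin_comp(1)[OF qT])
  also have "\<dots> = ?rhs"
    by (simp only: tlift4_tmap_vec_Delta_vec[OF in_tpow_phi] T_def E2)
  finally show ?thesis .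
qed

text \<open>
  The axioms normalise only the middle leg of \<open>\<phi>\<close>.  Applying \<open>\<epsilon>\<close> to the second leg of the
  pentagon gives \<open>\<phi> = (1 \<otimes> (\<epsilon> \<otimes> id \<otimes> id)(\<phi>)) \<phi>\<close>, and cancelling \<open>\<phi>\<close> yields
  \<open>(\<epsilon> \<otimes> id \<otimes> id)(\<phi>) = 1 \<otimes> 1\<close>; the third leg is treated symmetrically, and
  the statements for \<open>\<phi>\<^sup>-\<^sup>1\<close> follow by inverting.
\<close>
lemma phi_eq_eps_first_mult:
  assumes t: "trilin P"
  shows "tlift3 P phi = tlift3 (\<lambda>e1 e2 e3. sc (eps e1) (tlift3 (\<lambda>d1 d2 d3. P d1 (mult e2 d2) (mult e3 d3)) phi)) phi"
proof -
  have q: "quadlin (\<lambda>a b c d. sc (eps b) (P a c d))"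
    by (intro quadlinI) (simp_all add: linear_map_intros trilin_comp[OF t])
  note pentagon_tlift[OF q]
  have L: "tlift3 (\<lambda>p1 p2 p3. tlift2 (\<lambda>c1 c2. tlift3 (\<lambda>r1 r2 r3. tlift2 (\<lambda>a1 a2.
      sc (eps (mult p2 a2)) (P (mult p1 a1) (mult c1 r2) (mult c2 r3))) (Delta r1)) phi) (Delta p3)) phi = tlift3 P phi"
    by (simp del: sc_sc add: eps_mult sc_sc[symmetric] tlift_sc_out counit_right_tlift normalisation_tlift counit_left_tlift Delta_one tlift2_tprod bilin_def
        linear_map_intros trilin_comp[OF t])
  have R: "tlift3 (\<lambda>e1 e2 e3. tlift3 (\<lambda>d1 d2 d3. tlift2 (\<lambda>m1 m2. tlift3 (\<lambda>f1 f2 f3.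
      sc (eps (mult (mult e1 m1) f2)) (P (mult (mult one d1) f1) (mult (mult e2 m2) f3) (mult (mult e3 d3) one))) phi) (Delta d2)) phi) phi
     = tlift3 (\<lambda>e1 e2 e3. sc (eps e1) (tlift3 (\<lambda>d1 d2 d3. P d1 (mult e2 d2) (mult e3 d3)) phi)) phi"
    by (simp del: sc_sc add: eps_mult sc_sc[symmetric] tlift_sc_out counit_right_tlift normalisation_tlift counit_left_tlift Delta_one tlift2_tprod bilin_def
        linear_map_intros trilin_comp[OF t])
  show ?thesis using pentagon_tlift[OF q] L R by simp
qed

lemma normalisation_left:
  assumes G: "bilin G"
  shows "tlift3 (\<lambda>a b c. sc (eps a) (G b c)) phi = G one one"
proof -
  define P where "P = (\<lambda>a b c. tlift3 (\<lambda>z1 z2 z3. sc (eps (mult a z1)) (G (mult b z2) (mult c z3))) phinv)"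
  have tP: "trilin P" unfolding P_def
    by (intro trilinI) (simp_all add: linear_map_intros bilin_comp[OF G])
  have tG1: "trilin (\<lambda>x y z. sc (eps x) (G y z))"
    by (intro trilinI) (simp_all add: linear_map_intros bilin_comp[OF G])
  have P_phi: "tlift3 P phi = G one one"
    unfolding P_def using phi_phinv_tlift[OF tG1] by (simp add: eps_one)
  have P_mult: "tlift3 (\<lambda>d1 d2 d3. P d1 (mult e2 d2) (mult e3 d3)) phi = G e2 e3" for e2 e3
  proof -
    have tG2: "trilin (\<lambda>x y z. sc (eps x) (G (mult e2 y) (mult e3 z)))"
      by (intro trilinI) (simp_all add: linear_map_intros bilin_comp[OF G])
    show ?thesis unfolding P_def using phi_phinv_tlift[OF tG2] by (simp add: eps_one mult_assoc)
  qed
  show ?thesis using phi_eq_eps_first_mult[OF tP] P_phi P_mult by simp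
qed

lemma phi_eq_mult_eps_last:
  assumes t: "trilin P"
  shows "tlift3 P phi = tlift3 (\<lambda>d1 d2 d3. tlift3 (\<lambda>f1 f2 f3. sc (eps f3) (P (mult d1 f1) (mult d2 f2) d3)) phi) phi"
proof -
  have q: "quadlin (\<lambda>a b c d. sc (eps c) (P a b d))"
    by (intro quadlinI) (simp_all add: linear_map_intros trilin_comp[OF t])
  have L: "tlift3 (\<lambda>p1 p2 p3. tlift2 (\<lambda>c1 c2. tlift3 (\<lambda>r1 r2 r3. tlift2 (\<lambda>a1 a2.
      sc (eps (mult c1 r2)) (P (mult p1 a1) (mult p2 a2) (mult c2 r3))) (Delta r1)) phi) (Delta p3)) phi = tlift3 P phi"
    by (simp del: sc_sc add: eps_mult sc_sc[symmetric] tlift_sc_out counit_right_tlift normalisation_tlift counit_left_tlift Delta_one tlift2_tprod bilin_def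
        linear_map_intros trilin_comp[OF t])
  have R: "tlift3 (\<lambda>e1 e2 e3. tlift3 (\<lambda>d1 d2 d3. tlift2 (\<lambda>m1 m2. tlift3 (\<lambda>f1 f2 f3.
      sc (eps (mult (mult e2 m2) f3)) (P (mult (mult one d1) f1) (mult (mult e1 m1) f2) (mult (mult e3 d3) one))) phi) (Delta d2)) phi) phi
     = tlift3 (\<lambda>d1 d2 d3. tlift3 (\<lambda>f1 f2 f3. sc (eps f3) (P (mult d1 f1) (mult d2 f2) d3)) phi) phi"
    by (simp del: sc_sc add: eps_mult sc_sc[symmetric] tlift_sc_out counit_right_tlift normalisation_tlift counit_left_tlift Delta_one tlift2_tprod bilin_def
        linear_map_intros trilin_comp[OF t])
  show ?thesis using pentagon_tlift[OF q] L R by simp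
qed

lemma normalisation_right:
  assumes G: "bilin G"
  shows "tlift3 (\<lambda>a b c. sc (eps c) (G a b)) phi = G one one"
proof -
  define P where "P = (\<lambda>a b c. tlift3 (\<lambda>z1 z2 z3. sc (eps (mult z3 c)) (G (mult z1 a) (mult z2 b))) phinv)"
  have tP: "trilin P" unfolding P_def
    by (intro trilinI) (simp_all add: linear_map_intros bilin_comp[OF G])
  have tG1: "trilin (\<lambda>x y z. sc (eps z) (G x y))"
    by (intro trilinI) (simp_all add: linear_map_intros bilin_comp[OF G])
  have P_phi: "tlift3 P phi = G one one"
  proof -
    have "tlift3 P phi = tlift3 (\<lambda>a b c. tlift3 (\<lambda>z1 z2 z3. sc (eps (mult z3 c)) (G (mult z1 a) (mult z2 b))) phinv) phi"
      by (simp only: P_def)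
    also have "\<dots> = tlift3 (\<lambda>z1 z2 z3. tlift3 (\<lambda>a b c. sc (eps (mult z3 c)) (G (mult z1 a) (mult z2 b))) phi) phinv"
      by (rule tlift3_swap)
    also have "\<dots> = G one one" using phinv_phi_tlift[OF tG1] by (simp add: eps_one)
    finally show ?thesis .
  qed
  have P_mult: "tlift3 (\<lambda>d1 d2 d3. tlift3 (\<lambda>f1 f2 f3. sc (eps f3) (P (mult d1 f1) (mult d2 f2) d3)) phi) phi
     = tlift3 (\<lambda>f1 f2 f3. sc (eps f3) (G f1 f2)) phi"
  proof -
    have "tlift3 (\<lambda>d1 d2 d3. tlift3 (\<lambda>f1 f2 f3. sc (eps f3) (P (mult d1 f1) (mult d2 f2) d3)) phi) phi
       = tlift3 (\<lambda>d1 d2 d3. tlift3 (\<lambda>f1 f2 f3. tlift3 (\<lambda>z1 z2 z3. sc (eps f3) (sc (eps (mult z3 d3))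
            (G (mult z1 (mult d1 f1)) (mult z2 (mult d2 f2))))) phinv) phi) phi"
      by (simp only: P_def tlift3_sc_out[symmetric])
    also have "\<dots> = tlift3 (\<lambda>f1 f2 f3. tlift3 (\<lambda>d1 d2 d3. tlift3 (\<lambda>z1 z2 z3. sc (eps f3) (sc (eps (mult z3 d3))
            (G (mult z1 (mult d1 f1)) (mult z2 (mult d2 f2))))) phinv) phi) phi"
      by (rule tlift3_swap)
    also have "\<dots> = tlift3 (\<lambda>f1 f2 f3. tlift3 (\<lambda>z1 z2 z3. tlift3 (\<lambda>d1 d2 d3. sc (eps f3) (sc (eps (mult z3 d3))
            (G (mult z1 (mult d1 f1)) (mult z2 (mult d2 f2))))) phi) phinv) phi"
      by (simp only: tlift3_swap[of _ phinv phi])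
    also have "\<dots> = tlift3 (\<lambda>f1 f2 f3. sc (eps f3) (G f1 f2)) phi"
    proof -
      have "tlift3 (\<lambda>z1 z2 z3. tlift3 (\<lambda>d1 d2 d3. sc (eps f3) (sc (eps (mult z3 d3))
            (G (mult z1 (mult d1 f1)) (mult z2 (mult d2 f2))))) phi) phinv = sc (eps f3) (G f1 f2)" for f1 f2 f3
      proof -
        have tW: "trilin (\<lambda>x y w. sc (eps f3) (sc (eps w) (G (mult x f1) (mult y f2))))"
          by (intro trilinI) (simp_all del: sc_sc add: linear_map_intros bilin_comp[OF G])
        show ?thesis using phinv_phi_tlift[OF tW] by (simp add: eps_one mult_assoc)
      qed
      then show ?thesis by simp
    qed
    finally show ?thesis .
  qed
  show ?thesis using phi_eq_mult_eps_last[OF tP] P_phi P_mult by simp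
qed

lemma normalisation_phinv:
  assumes G: "bilin G"
  shows "tlift3 (\<lambda>a b c. sc (eps b) (G a c)) phinv = G one one"
proof -
  have tG: "trilin (\<lambda>x y z. sc (eps y) (G x z))"
    by (intro trilinI) (simp_all add: linear_map_intros bilin_comp[OF G])
  have "G one one = tlift3 (\<lambda>a b c. tlift3 (\<lambda>a' b' c'. sc (eps (mult b b')) (G (mult a a') (mult c c'))) phinv) phi"
    using phi_phinv_tlift[OF tG] by (simp add: eps_one)
  also have "\<dots> = tlift3 (\<lambda>a' b' c'. tlift3 (\<lambda>a b c. sc (eps (mult b b')) (G (mult a a') (mult c c'))) phi) phinv"
    by (rule tlift3_swap)
  also have "\<dots> = tlift3 (\<lambda>a b c. sc (eps b) (G a c)) phinv"
    by (simp del: sc_sc add: eps_mult mult.commute[of "eps _" "eps _"] sc_sc[symmetric] tlift_sc_out normalisation_tlift bilin_def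
        linear_map_intros bilin_comp[OF G])
  finally show ?thesis by simp
qed

lemma normalisation_right_phinv:
  assumes G: "bilin G"
  shows "tlift3 (\<lambda>a b c. sc (eps c) (G a b)) phinv = G one one"
proof -
  have tG: "trilin (\<lambda>x y z. sc (eps z) (G x y))"
    by (intro trilinI) (simp_all add: linear_map_intros bilin_comp[OF G])
  have "G one one = tlift3 (\<lambda>a b c. tlift3 (\<lambda>a' b' c'. sc (eps (mult c c')) (G (mult a a') (mult b b'))) phinv) phi"
    using phi_phinv_tlift[OF tG] by (simp add: eps_one)
  also have "\<dots> = tlift3 (\<lambda>a' b' c'. tlift3 (\<lambda>a b c. sc (eps (mult c c')) (G (mult a a') (mult b b'))) phi) phinv"
    by (rule tlift3_swap)
  also have "\<dots> = tlift3 (\<lambda>a b c. sc (eps c) (G a b)) phinv"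
    by (simp del: sc_sc add: eps_mult mult.commute[of "eps _" "eps _"] sc_sc[symmetric] tlift_sc_out normalisation_right bilin_def
        linear_map_intros bilin_comp[OF G])
  finally show ?thesis by simp
qed

section \<open>The twisted canonical map\<close>

lemma phinv_phi_vec_vec_Delta: "mulT mult (tmap [vec, vec, Delta] phinv) (tmap [vec, vec, Delta] phi) = tprod [one, one, one, one]"
proof (rule tensor4_eqI)
  show "in_tpow 4 (mulT mult (tmap [vec, vec, Delta] phinv) (tmap [vec, vec, Delta] phi))"
    by (rule in_tpow_mulT[OF in_tpow_tmap_vec_vec_Delta[OF in_tpow_phinv] in_tpow_tmap_vec_vec_Delta[OF in_tpow_phi]])
  show "in_tpow 4 (tprod [one, one, one, one])" by (rule in_tpow_one4)
  fix N :: "('b,'k) hvec \<Rightarrow> ('b,'k) hvec \<Rightarrow> ('b,'k) hvec \<Rightarrow> ('b,'k) hvec \<Rightarrow> ('b,'k) tens"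
  assume q: "quadlin N"
  have "tlift4 N (mulT mult (tmap [vec, vec, Delta] phinv) (tmap [vec, vec, Delta] phi))
     = tlift3 (\<lambda>x1 x2 x3. tlift2 (\<lambda>s1 s2. tlift3 (\<lambda>p1 p2 p3. tlift2 (\<lambda>c1 c2.
         N (mult x1 p1) (mult x2 p2) (mult s1 c1) (mult s2 c2)) (Delta p3)) phi) (Delta x3)) phinv"
    by (simp only: tlift4_mulT[OF in_tpow_tmap_vec_vec_Delta[OF in_tpow_phinv] in_tpow_tmap_vec_vec_Delta[OF in_tpow_phi] q] tlift4_tmap_vec_vec_Delta[OF in_tpow_phinv] tlift4_tmap_vec_vec_Delta[OF in_tpow_phi])
  also have "\<dots> = tlift3 (\<lambda>x1 x2 x3. tlift3 (\<lambda>p1 p2 p3. tlift2 (\<lambda>s1 s2. tlift2 (\<lambda>c1 c2.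
         N (mult x1 p1) (mult x2 p2) (mult s1 c1) (mult s2 c2)) (Delta p3)) (Delta x3)) phi) phinv"
    by (simp only: tlift23_swap)
  also have "\<dots> = tlift3 (\<lambda>x1 x2 x3. tlift3 (\<lambda>p1 p2 p3. tlift2 (\<lambda>u1 u2.
         N (mult x1 p1) (mult x2 p2) u1 u2) (Delta (mult x3 p3))) phi) phinv"
    by (simp add: Delta_mult tlift2_mulT in_tpow_Delta bilin_def linear_map_intros quadlin_comp[OF q])
  also have "\<dots> = tlift2 (\<lambda>u1 u2. N one one u1 u2) (Delta one)"
    by (rule phinv_phi_tlift) (intro trilinI; simp add: linear_map_intros quadlin_comp[OF q])
  also have "\<dots> = tlift4 N (tprod [one, one, one, one])"
    by (simp add: Delta_one tlift2_tprod tlift4_tprod[OF q] bilin_def linear_map_intros quadlin_comp[OF q])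
  finally show "tlift4 N (mulT mult (tmap [vec, vec, Delta] phinv) (tmap [vec, vec, Delta] phi)) = tlift4 N (tprod [one, one, one, one])" .
qed

lemma phi_phinv_tens_one: "mulT mult (tens phi (vec one)) (tens phinv (vec one)) = tprod [one, one, one, one]"
proof (rule tensor4_eqI)
  show "in_tpow 4 (mulT mult (tens phi (vec one)) (tens phinv (vec one)))"
    by (rule in_tpow_mulT[OF in_tpow_tens_vec_right[OF in_tpow_phi] in_tpow_tens_vec_right[OF in_tpow_phinv]])
  show "in_tpow 4 (tprod [one, one, one, one])" by (rule in_tpow_one4)
  fix N :: "('b,'k) hvec \<Rightarrow> ('b,'k) hvec \<Rightarrow> ('b,'k) hvec \<Rightarrow> ('b,'k) hvec \<Rightarrow> ('b,'k) tens"
  assume q: "quadlin N"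
  have "tlift4 N (mulT mult (tens phi (vec one)) (tens phinv (vec one)))
     = tlift3 (\<lambda>p1 p2 p3. tlift3 (\<lambda>x1 x2 x3. N (mult p1 x1) (mult p2 x2) (mult p3 x3) (mult one one)) phinv) phi"
    by (simp del: mult_one_left mult_one_right add: tlift4_mulT[OF in_tpow_tens_vec_right[OF in_tpow_phi] in_tpow_tens_vec_right[OF in_tpow_phinv] q] tlift4_tens_vec_right in_tpow_phi in_tpow_phinv
       linear_map_intros quadlin_comp[OF q])
  also have "\<dots> = N one one one (mult one one)"
    by (rule phi_phinv_tlift) (intro trilinI; simp add: linear_map_intros quadlin_comp[OF q])
  also have "\<dots> = tlift4 N (tprod [one, one, one, one])"
    by (simp add: tlift4_tprod[OF q])
  finally show "tlift4 N (mulT mult (tens phi (vec one)) (tens phinv (vec one))) = tlift4 N (tprod [one, one, one, one])" .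
qed

lemma phi_phinv_vec_Delta_vec: "mulT mult (tmap [vec, Delta, vec] phi) (tmap [vec, Delta, vec] phinv) = tprod [one, one, one, one]"
proof (rule tensor4_eqI)
  show "in_tpow 4 (mulT mult (tmap [vec, Delta, vec] phi) (tmap [vec, Delta, vec] phinv))"
    by (rule in_tpow_mulT[OF in_tpow_tmap_vec_Delta_vec[OF in_tpow_phi] in_tpow_tmap_vec_Delta_vec[OF in_tpow_phinv]])
  show "in_tpow 4 (tprod [one, one, one, one])" by (rule in_tpow_one4)
  fix N :: "('b,'k) hvec \<Rightarrow> ('b,'k) hvec \<Rightarrow> ('b,'k) hvec \<Rightarrow> ('b,'k) hvec \<Rightarrow> ('b,'k) tens"
  assume q: "quadlin N"
  have "tlift4 N (mulT mult (tmap [vec, Delta, vec] phi) (tmap [vec, Delta, vec] phinv))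
     = tlift3 (\<lambda>p1 p2 p3. tlift2 (\<lambda>b1 b2. tlift3 (\<lambda>x1 x2 x3. tlift2 (\<lambda>c1 c2.
         N (mult p1 x1) (mult b1 c1) (mult b2 c2) (mult p3 x3)) (Delta x2)) phinv) (Delta p2)) phi"
    by (simp only: tlift4_mulT[OF in_tpow_tmap_vec_Delta_vec[OF in_tpow_phi] in_tpow_tmap_vec_Delta_vec[OF in_tpow_phinv] q] tlift4_tmap_vec_Delta_vec[OF in_tpow_phi] tlift4_tmap_vec_Delta_vec[OF in_tpow_phinv])
  also have "\<dots> = tlift3 (\<lambda>p1 p2 p3. tlift3 (\<lambda>x1 x2 x3. tlift2 (\<lambda>b1 b2. tlift2 (\<lambda>c1 c2.
         N (mult p1 x1) (mult b1 c1) (mult b2 c2) (mult p3 x3)) (Delta x2)) (Delta p2)) phinv) phi"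
    by (simp only: tlift23_swap)
  also have "\<dots> = tlift3 (\<lambda>p1 p2 p3. tlift3 (\<lambda>x1 x2 x3. tlift2 (\<lambda>u1 u2.
         N (mult p1 x1) u1 u2 (mult p3 x3)) (Delta (mult p2 x2))) phinv) phi"
    by (simp add: Delta_mult tlift2_mulT in_tpow_Delta bilin_def linear_map_intros quadlin_comp[OF q])
  also have "\<dots> = tlift2 (\<lambda>u1 u2. N one u1 u2 one) (Delta one)"
    by (rule phi_phinv_tlift[where F="\<lambda>a b c. tlift2 (\<lambda>u1 u2. N a u1 u2 c) (Delta b)"]) (intro trilinI; simp add: linear_map_intros quadlin_comp[OF q])
  also have "\<dots> = tlift4 N (tprod [one, one, one, one])"
    by (simp add: Delta_one tlift2_tprod tlift4_tprod[OF q] bilin_def linear_map_intros quadlin_comp[OF q])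
  finally show "tlift4 N (mulT mult (tmap [vec, Delta, vec] phi) (tmap [vec, Delta, vec] phinv)) = tlift4 N (tprod [one, one, one, one])" .
qed

lemma pentagon_rearranged:
  "mulT mult (tmap [vec, vec, Delta] phinv) (tens (vec one) phi)
   = mulT mult (tmap [Delta, vec, vec] phi) (mulT mult (tens phinv (vec one)) (tmap [vec, Delta, vec] phinv))"
proof -
  let ?T = "tmap [vec, vec, Delta] phinv" and ?A = "tmap [vec, vec, Delta] phi" and ?B = "tmap [Delta, vec, vec] phi"
    and ?E1 = "tens (vec one) phi" and ?D = "tmap [vec, Delta, vec] phi" and ?E2 = "tens phi (vec one)"
    and ?E2i = "tens phinv (vec one)" and ?Di = "tmap [vec, Delta, vec] phinv"
  have tp: "in_tpow 4 ?T" "in_tpow 4 ?A" "in_tpow 4 ?B" "in_tpow 4 ?E1" "in_tpow 4 ?D" "in_tpow 4 ?E2"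
     "in_tpow 4 ?E2i" "in_tpow 4 ?Di"
    by (simp_all add: in_tpow_tmap_vec_vec_Delta in_tpow_tmap_Delta_vec_vec in_tpow_tmap_vec_Delta_vec in_tpow_tens_vec_left in_tpow_tens_vec_right in_tpow_phi in_tpow_phinv)
  note tps = tp in_tpow_mulT in_tpow_one4
  have B: "?B = mulT mult ?T (mulT mult ?E1 (mulT mult ?D ?E2))"
  proof -
    have "mulT mult ?T (mulT mult ?E1 (mulT mult ?D ?E2)) = mulT mult ?T (mulT mult (mulT mult ?E1 ?D) ?E2)"
      by (simp only: mulT_assoc4 tps)
    also have "\<dots> = mulT mult ?T (mulT mult ?A ?B)" by (simp only: pentagon)
    also have "\<dots> = mulT mult (mulT mult ?T ?A) ?B" by (simp only: mulT_assoc4 tps)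
    also have "\<dots> = ?B" by (simp only: phinv_phi_vec_vec_Delta mulT_one4_left tps)
    finally show ?thesis by simp
  qed
  have c1: "mulT mult ?E2 (mulT mult ?E2i ?Di) = ?Di"
    by (simp only: mulT_assoc4[symmetric] tps phi_phinv_tens_one mulT_one4_left)
  have "mulT mult ?B (mulT mult ?E2i ?Di) = mulT mult ?T (mulT mult ?E1 (mulT mult ?D (mulT mult ?E2 (mulT mult ?E2i ?Di))))"
    by (subst B) (simp only: mulT_assoc4 tps)
  also have "\<dots> = mulT mult ?T ?E1"
    by (simp only: c1 phi_phinv_vec_Delta_vec mulT_one4_right tps)
  finally show ?thesis by simp
qed

definition qL :: "('b,'k) tens" where
  "qL = lin_ext (\<lambda>u. tens (vec (mult (mult (S (bv (u!0))) alpha) (bv (u!1)))) (vec (bv (u!2)))) phinv"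

definition can :: "('b,'k) tens \<Rightarrow> ('b,'k) tens" where
  "can w = tlift2 (\<lambda>x y. mulT mult (mulT mult (tprod [x, one]) qL) (Delta y)) w"

definition can_linv :: "('b,'k) tens \<Rightarrow> ('b,'k) tens" where
  "can_linv z = tlift2 (\<lambda>a b. tlift3 (\<lambda>p1 p2 p3. tlift2 (\<lambda>b1 b2.
     tprod [mult (mult (mult (mult a p1) beta) (S p2)) (S b1), mult b2 p3]) (Delta b)) phi) z"

lemma in_tpow_qL: "in_tpow 2 qL"
  unfolding qL_def lin_ext_eq_lin_extend
  by (rule in_tpow_lin_extend) (rule in_tpow_tens[OF in_tpow_vec in_tpow_vec], simp)

lemma tlift2_qL: "bilin G \<Longrightarrow> tlift2 G qL = tlift3 (\<lambda>a b c. G (mult (mult (S a) alpha) b) c) phinv"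
  unfolding qL_def lin_ext_eq_lin_extend tlift2_lin_extend by (simp add: tlift2_tens_vec tlift3_def)

lemma qL_phi_identity_expanded:
  assumes G: "bilin G"
  shows "tlift3 (\<lambda>x1 x2 x3. tlift2 (\<lambda>s1 s2. tlift3 (\<lambda>p1 p2 p3.
     G (mult (S x1) (mult alpha (mult x2 (mult p1 (mult beta (mult (S p2) (S s1))))))) (mult s2 p3)) phi) (Delta x3)) phinv
   = tlift3 (\<lambda>f1 f2 f3. tlift2 (\<lambda>g1 g2. tlift3 (\<lambda>z1 z2 z3. tlift3 (\<lambda>y1 y2 y3. tlift2 (\<lambda>m1 m2.
     G (mult (S y1) (mult (S z1) (mult (S g1) (mult alpha (mult g2 (mult z2 (mult m1 (mult beta (mult (S m2) (mult (S z3) (S f2)))))))))))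
       (mult f3 y3)) (Delta y2)) phinv) phinv) (Delta f1)) phi"
proof -
  define N where "N = (\<lambda>a b c d. G (mult (S a) (mult alpha (mult b (mult beta (S c))))) d)"
  have q: "quadlin N" unfolding N_def
    by (intro quadlinI) (simp_all add: linear_map_intros bilin_comp[OF G])
  have e: "tlift4 N (mulT mult (tmap [vec, vec, Delta] phinv) (tens (vec one) phi))
     = tlift4 N (mulT mult (tmap [Delta, vec, vec] phi) (mulT mult (tens phinv (vec one)) (tmap [vec, Delta, vec] phinv)))"
    by (simp only: pentagon_rearranged)
  have L: "tlift4 N (mulT mult (tmap [vec, vec, Delta] phinv) (tens (vec one) phi)) = tlift3 (\<lambda>x1 x2 x3. tlift2 (\<lambda>s1 s2. tlift3 (\<lambda>p1 p2 p3.
     G (mult (S x1) (mult alpha (mult x2 (mult p1 (mult beta (mult (S p2) (S s1))))))) (mult s2 p3)) phi) (Delta x3)) phinv"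
    by (simp only: tlift4_mulT[OF in_tpow_tmap_vec_vec_Delta[OF in_tpow_phinv] in_tpow_tens_vec_left[OF in_tpow_phi] q]
        tlift4_tmap_vec_vec_Delta[OF in_tpow_phinv])
      (simp add: tlift4_tens_vec_left N_def linear_map_intros bilin_comp[OF G] mult_assoc S_antimult S_one)
  have R: "tlift4 N (mulT mult (tmap [Delta, vec, vec] phi) (mulT mult (tens phinv (vec one)) (tmap [vec, Delta, vec] phinv)))
    = tlift3 (\<lambda>f1 f2 f3. tlift2 (\<lambda>g1 g2. tlift3 (\<lambda>z1 z2 z3. tlift3 (\<lambda>y1 y2 y3. tlift2 (\<lambda>m1 m2.
     G (mult (S y1) (mult (S z1) (mult (S g1) (mult alpha (mult g2 (mult z2 (mult m1 (mult beta (mult (S m2) (mult (S z3) (S f2)))))))))))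
       (mult f3 y3)) (Delta y2)) phinv) phinv) (Delta f1)) phi"
    by (simp add: tlift4_mulT in_tpow_mulT in_tpow_tmap_Delta_vec_vec in_tpow_tens_vec_right in_tpow_tmap_vec_Delta_vec in_tpow_phi in_tpow_phinv q quadlin_def
      quadlin_comp[OF q]
      tlift4_tmap_Delta_vec_vec tlift4_tmap_vec_Delta_vec tlift4_tens_vec_right N_def linear_map_intros bilin_comp[OF G] mult_assoc S_antimult S_one)
  show ?thesis using e L R by simp
qed

lemma qL_phi_identity:
  assumes G: "bilin G"
  shows "tlift3 (\<lambda>x1 x2 x3. tlift2 (\<lambda>s1 s2. tlift3 (\<lambda>p1 p2 p3.
     G (mult (S x1) (mult alpha (mult x2 (mult p1 (mult beta (mult (S p2) (S s1))))))) (mult s2 p3)) phi) (Delta x3)) phinv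
   = G one one"
proof -
  note lin = linear_map_intros bilin_comp[OF G]
  have alpha_axiom: "tlift2 (\<lambda>g1 g2. tlift3 (\<lambda>z1 z2 z3. tlift3 (\<lambda>y1 y2 y3. tlift2 (\<lambda>m1 m2.
     G (mult (S y1) (mult (S z1) (mult (S g1) (mult alpha (mult g2 (mult z2 (mult m1 (mult beta (mult (S m2) (mult (S z3) (S f2)))))))))))
       (mult f3 y3)) (Delta y2)) phinv) phinv) (Delta f1)
    = sc (eps f1) (tlift3 (\<lambda>z1 z2 z3. tlift3 (\<lambda>y1 y2 y3. tlift2 (\<lambda>m1 m2.
     G (mult (S y1) (mult (S z1) (mult alpha (mult z2 (mult m1 (mult beta (mult (S m2) (mult (S z3) (S f2)))))))))
       (mult f3 y3)) (Delta y2)) phinv) phinv)" for f1 f2 f3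
  proof -
    have "tlift2 (\<lambda>g1 g2. (\<lambda>v. tlift3 (\<lambda>z1 z2 z3. tlift3 (\<lambda>y1 y2 y3. tlift2 (\<lambda>m1 m2.
     G (mult (S y1) (mult (S z1) (mult v (mult z2 (mult m1 (mult beta (mult (S m2) (mult (S z3) (S f2)))))))))
       (mult f3 y3)) (Delta y2)) phinv) phinv) (mult (mult (S g1) alpha) g2)) (Delta f1)
      = sc (eps f1) ((\<lambda>v. tlift3 (\<lambda>z1 z2 z3. tlift3 (\<lambda>y1 y2 y3. tlift2 (\<lambda>m1 m2.
     G (mult (S y1) (mult (S z1) (mult v (mult z2 (mult m1 (mult beta (mult (S m2) (mult (S z3) (S f2)))))))))
       (mult f3 y3)) (Delta y2)) phinv) phinv) alpha)"
      by (rule antipode_alpha_tlift) (simp add: lin)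
    then show ?thesis by (simp add: mult_assoc)
  qed
  have beta_axiom: "tlift2 (\<lambda>m1 m2. G (mult (S y1) (mult (S z1) (mult alpha (mult z2 (mult m1 (mult beta (mult (S m2) (S z3))))))))
       y3) (Delta y2) = sc (eps y2) (G (mult (S y1) (mult (S z1) (mult alpha (mult z2 (mult beta (S z3)))))) y3)" for y1 y2 y3 z1 z2 z3
  proof -
    have "tlift2 (\<lambda>m1 m2. (\<lambda>v. G (mult (S y1) (mult (S z1) (mult alpha (mult z2 (mult v (S z3)))))) y3)
         (mult (mult m1 beta) (S m2))) (Delta y2)
      = sc (eps y2) ((\<lambda>v. G (mult (S y1) (mult (S z1) (mult alpha (mult z2 (mult v (S z3)))))) y3) beta)"
      by (rule antipode_beta_tlift) (simp add: lin)
    then show ?thesis by (simp add: mult_assoc)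
  qed
  have phinv_axiom: "tlift3 (\<lambda>z1 z2 z3. G (mult (S z1) (mult alpha (mult z2 (mult beta (S z3))))) one) phinv = G one one"
  proof -
    have "tlift3 (\<lambda>z1 z2 z3. (\<lambda>v. G v one) (mult (mult (mult (mult (S z1) alpha) z2) beta) (S z3))) phinv = (\<lambda>v. G v one) one"
      by (rule antipode_phinv_tlift) (simp add: lin)
    then show ?thesis by (simp add: mult_assoc)
  qed
  show ?thesis
    unfolding qL_phi_identity_expanded[OF G] alpha_axiom
    by (simp add: normalisation_left normalisation_phinv bilin_def lin S_one beta_axiom phinv_axiom)
qed

lemma tlift2_can_linv_can_tprod:
  assumes G: "bilin G"
  shows "tlift2 G (can_linv (mulT mult (mulT mult (tprod [x, one]) qL) (Delta y))) =
    tlift3 (\<lambda>x1 x2 x3. tlift2 (\<lambda>y1 y2. tlift3 (\<lambda>p1 p2 p3. tlift2 (\<lambda>s1 s2. tlift2 (\<lambda>t1 t2.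
      G (mult x (mult (S x1) (mult alpha (mult x2 (mult y1 (mult p1 (mult beta (mult (S p2) (mult (S t1) (S s1))))))))))
        (mult s2 (mult t2 p3))) (Delta y2)) (Delta x3)) phi) (Delta y)) phinv"
  unfolding can_linv_def
  by (simp add: tlift2_commute tlift3_commute tlift2_tprod G linear_map_intros)
    (simp add: tlift2_mulT in_tpow_mulT in_tpow_tprod in_tpow_qL in_tpow_Delta tlift2_qL bilin_def
      linear_map_intros bilin_comp[OF G] tlift2_tprod Delta_mult mult_assoc S_antimult Delta_one S_one)

text \<open>
  Quasi-coassociativity moves \<open>\<Delta>(y)\<close> past \<open>\<phi>\<close>, the \<open>\<beta>\<close>-axiom and the counit
  absorb it, and what remains is \<open>x\<close> times the left-hand side of \<open>qL_phi_identity\<close>.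
\<close>
lemma can_linv_can_tprod_tlift:
  assumes G: "bilin G"
  shows "tlift2 G (can_linv (mulT mult (mulT mult (tprod [x, one]) qL) (Delta y))) = G x y"
proof -
  note lin = linear_map_intros bilin_comp[OF G]
  have swap: "tlift2 (\<lambda>y1 y2. tlift3 (\<lambda>p1 p2 p3. tlift2 (\<lambda>s1 s2. tlift2 (\<lambda>t1 t2.
      G (mult x (mult (S x1) (mult alpha (mult x2 (mult y1 (mult p1 (mult beta (mult (S p2) (mult (S t1) (S s1))))))))))
        (mult s2 (mult t2 p3))) (Delta y2)) (Delta x3)) phi) (Delta y)
    = tlift2 (\<lambda>s1 s2. tlift2 (\<lambda>y1 y2. tlift2 (\<lambda>t1 t2. tlift3 (\<lambda>p1 p2 p3.
      G (mult x (mult (S x1) (mult alpha (mult x2 (mult y1 (mult p1 (mult beta (mult (S p2) (mult (S t1) (S s1))))))))))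
        (mult s2 (mult t2 p3))) phi) (Delta y2)) (Delta y)) (Delta x3)" for x1 x2 x3
    by (simp only: tlift32_swap, rule tlift2_swap)
  have coassoc: "tlift2 (\<lambda>y1 y2. tlift2 (\<lambda>t1 t2. tlift3 (\<lambda>p1 p2 p3.
      G (mult x (mult (S x1) (mult alpha (mult x2 (mult y1 (mult p1 (mult beta (mult (S p2) (mult (S t1) (S s1))))))))))
        (mult s2 (mult t2 p3))) phi) (Delta y2)) (Delta y)
    = tlift3 (\<lambda>p1 p2 p3. tlift2 (\<lambda>a b. tlift2 (\<lambda>a1 a2.
      G (mult x (mult (S x1) (mult alpha (mult x2 (mult p1 (mult a1 (mult beta (mult (S a2) (mult (S p2) (S s1))))))))))
        (mult s2 (mult p3 b))) (Delta a)) (Delta y)) phi" for x1 x2 s1 s2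
  proof -
    have t: "trilin (\<lambda>A B C. G (mult x (mult (S x1) (mult alpha (mult x2 (mult A (mult beta (mult (S B) (S s1))))))))
          (mult s2 C))"
      by (intro trilinI) (simp_all add: lin)
    show ?thesis using quasi_coassoc_tlift[OF t, of y] by (simp add: mult_assoc S_antimult)
  qed
  have beta_axiom: "tlift2 (\<lambda>a1 a2.
      G (mult x (mult (S x1) (mult alpha (mult x2 (mult p1 (mult a1 (mult beta (mult (S a2) (mult (S p2) (S s1))))))))))
        (mult s2 (mult p3 b))) (Delta a)
    = sc (eps a) (G (mult x (mult (S x1) (mult alpha (mult x2 (mult p1 (mult beta (mult (S p2) (S s1))))))))
        (mult s2 (mult p3 b)))" for x1 x2 s1 s2 p1 p2 p3 a b
  proof -
    have "tlift2 (\<lambda>a1 a2. (\<lambda>v. G (mult x (mult (S x1) (mult alpha (mult x2 (mult p1 (mult v (mult (S p2) (S s1))))))))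
        (mult s2 (mult p3 b))) (mult (mult a1 beta) (S a2))) (Delta a)
      = sc (eps a) ((\<lambda>v. G (mult x (mult (S x1) (mult alpha (mult x2 (mult p1 (mult v (mult (S p2) (S s1))))))))
        (mult s2 (mult p3 b))) beta)"
      by (rule antipode_beta_tlift) (simp add: lin)
    then show ?thesis by (simp add: mult_assoc)
  qed
  have G_shift: "bilin (\<lambda>A B. G (mult x A) (mult B y))"
    by (intro bilinI) (simp_all add: lin)
  have qL_identity: "tlift3 (\<lambda>x1 x2 x3. tlift2 (\<lambda>s1 s2. tlift3 (\<lambda>p1 p2 p3.
     G (mult x (mult (S x1) (mult alpha (mult x2 (mult p1 (mult beta (mult (S p2) (S s1)))))))) (mult s2 (mult p3 y))) phi) (Delta x3)) phinv
     = G x y"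
    using qL_phi_identity[OF G_shift] by (simp add: mult_assoc)
  show ?thesis
    unfolding tlift2_can_linv_can_tprod[OF G] swap coassoc beta_axiom
    by (simp add: counit_left_tlift lin qL_identity)
qed

lemma qL_counit_right: "tlift2 (\<lambda>a b. sc (eps b) a) qL = alpha"
proof -
  have "tlift2 (\<lambda>a b. sc (eps b) a) qL = tlift3 (\<lambda>a b c. sc (eps c) (mult (mult (S a) alpha) b)) phinv"
    by (rule tlift2_qL) (simp add: bilin_def linear_map_intros)
  also have "\<dots> = mult (mult (S one) alpha) one"
    by (rule normalisation_right_phinv) (simp add: bilin_def linear_map_intros)
  finally show ?thesis by (simp add: S_one)
qed

lemma qL_beta_S: "tlift2 (\<lambda>a b. mult a (mult beta (S (mult h b)))) qL = S h"
proof -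
  have "tlift2 (\<lambda>a b. mult a (mult beta (S (mult h b)))) qL
      = tlift3 (\<lambda>a b c. mult (mult (mult (S a) alpha) b) (mult beta (S (mult h c)))) phinv"
    by (rule tlift2_qL) (simp add: bilin_def linear_map_intros)
  also have "\<dots> = tlift3 (\<lambda>a b c. (\<lambda>v. mult v (S h)) (mult (mult (mult (mult (S a) alpha) b) beta) (S c))) phinv"
    by (simp add: mult_assoc S_antimult)
  also have "\<dots> = S h"
    by (subst antipode_phinv_tlift) (simp_all add: linear_map_intros)
  finally show ?thesis .
qed

lemma can_linv_counit_right: "tlift2 (\<lambda>a b. sc (eps b) a) (can_linv (tprod [one, h])) = mult beta (S h)"
  unfolding can_linv_def
  by (simp del: sc_sc add: tlift2_tprod bilin_def linear_map_intros tlift2_commute tlift3_commute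
      eps_mult sc_sc[symmetric] tlift_sc_out counit_right_tlift normalisation_right S_one)

lemma can_linear: "linear_map can"
  unfolding can_def[abs_def] tlift2_def by (rule linear_map_lin_extend)

lemma can_linv_linear: "linear_map can_linv"
  unfolding can_linv_def[abs_def] tlift2_def by (rule linear_map_lin_extend)

lemma in_tpow_can_linv: "in_tpow 2 (can_linv z)"
  unfolding can_linv_def by (intro in_tpow_tlift2 in_tpow_tlift3 in_tpow_tprod) simp

lemma can_linv_can_tprod: "can_linv (mulT mult (mulT mult (tprod [x, one]) qL) (Delta y)) = tprod [x, y]"
  by (rule tensor2_eqI) (simp_all add: in_tpow_can_linv in_tpow_tprod can_linv_can_tprod_tlift tlift2_tprod)

lemma can_linv_can: "in_tpow 2 w \<Longrightarrow> can_linv (can w) = w"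
  unfolding can_def tlift2_commute[OF can_linv_linear] can_linv_can_tprod by (rule tlift2_tprod_id)

end

section \<open>Finite-dimensional subspaces\<close>

interpretation pm: vector_space "sc :: 'k::field \<Rightarrow> ('c \<Rightarrow>\<^sub>0 'k) \<Rightarrow> ('c \<Rightarrow>\<^sub>0 'k)"
  by unfold_locales (simp_all add: sc_add sc_add_left)

lemma linear_map_iff_linear: "linear_map f \<longleftrightarrow> Vector_Spaces.linear sc sc f"
  by (simp add: Vector_Spaces.linear_iff linear_map_def pm.vector_space_axioms)

lemma lspan_eq_span: "lspan F = pm.span F"
proof (intro set_eqI iffI)
  fix x assume "x \<in> lspan F"
  then obtain m :: nat and c f where "x = (\<Sum>i<m. sc (c i) (f i))" "\<forall>i<m. f i \<in> F"
    unfolding lspan_def by blast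
  then show "x \<in> pm.span F"
    by (auto intro!: pm.span_sum pm.span_scale intro: pm.span_base)
next
  fix x assume "x \<in> pm.span F"
  then obtain t r where x: "x = (\<Sum>a\<in>t. sc (r a) a)" "finite t" "t \<subseteq> F"
    unfolding pm.span_explicit by blast
  obtain g where g: "bij_betw g {..<card t} t"
    using ex_bij_betw_nat_finite[OF x(2)] by (auto simp: atLeast0LessThan)
  have "x = (\<Sum>i<card t. sc (r (g i)) (g i))"
    using sum.reindex_bij_betw[OF g, of "\<lambda>a. sc (r a) a"] x(1) by simp
  moreover have "\<forall>i<card t. g i \<in> F"
    using g x(3) by (auto dest: bij_betwE)
  ultimately show "x \<in> lspan F"
    unfolding lspan_def by (intro CollectI exI[of _ "card t"] exI[of _ "\<lambda>i. r (g i)"] exI[of _ g]) simp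
qed

lemma linear_map_span_subset:
  assumes "linear_map f" "pm.subspace V" "\<And>x. x \<in> F \<Longrightarrow> f x \<in> V" "x \<in> pm.span F"
  shows "f x \<in> V"
proof -
  have "pm.subspace {x. f x \<in> V}"
    using assms(1,2) by (auto simp: pm.subspace_def linear_map_zero linear_map_add linear_map_sc)
  then show ?thesis
    using pm.span_induct[OF assms(4), of "\<lambda>x. f x \<in> V"] assms(3) by blast
qed

lemma linear_inj_on_imp_surj_on:
  fixes f :: "('c \<Rightarrow>\<^sub>0 'k::field) \<Rightarrow> ('c \<Rightarrow>\<^sub>0 'k)"
  assumes V: "pm.subspace V" and T: "finite T" "V \<subseteq> pm.span T"
    and f: "linear_map f" "f ` V \<subseteq> V" "inj_on f V"
  shows "f ` V = V"
proof -
  interpret L: Vector_Spaces.linear sc sc f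
    using f(1) by (simp add: linear_map_iff_linear)
  obtain B where B: "B \<subseteq> V" "pm.independent B" "V \<subseteq> pm.span B"
    by (meson pm.basis_exists)
  have span_B: "pm.span B = V"
    using B(1,3) pm.span_minimal[OF B(1) V] by blast
  have finite_B: "finite B"
    using pm.independent_span_bound[OF T(1) B(2)] B(1) T(2) by auto
  have card_fB: "card (f ` B) = card B"
    using card_image inj_on_subset[OF f(3) B(1)] by blast
  have indep_fB: "pm.independent (f ` B)"
    using L.independent_injective_image[OF B(2)] f(3) span_B by simp
  have "V \<subseteq> pm.span (f ` B)"
  proof
    fix a assume a: "a \<in> V"
    show "a \<in> pm.span (f ` B)"
    proof (rule ccontr)
      assume a_notin: "a \<notin> pm.span (f ` B)"
      have "insert a (f ` B) \<subseteq> pm.span B"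
        using a f(2) B(1) span_B by blast
      then have "card (insert a (f ` B)) \<le> card B"
        using pm.independent_span_bound[OF finite_B pm.independent_insertI[OF a_notin indep_fB]] by simp
      moreover have "a \<notin> f ` B"
        using a_notin pm.span_base by blast
      ultimately show False
        using card_fB finite_B by simp
    qed
  qed
  then have "V \<subseteq> f ` V"
    using L.span_image[of B] span_B by simp
  then show ?thesis
    using f(2) by blast
qed

lemma tpow2_eq_span: "tpow K 2 = pm.span {tprod [a, b] | a b. a \<in> K \<and> b \<in> K}"
proof -
  have "{tprod as | as. set as \<subseteq> K \<and> length as = 2} = {tprod [a, b] | a b. a \<in> K \<and> b \<in> K}"
    by (auto simp: numeral_2_eq_2 length_Suc_conv) (metis empty_subsetI insert_subset list.set(1,2) list.size(3,4) One_nat_def)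
  then show ?thesis
    by (simp add: tpow_def lspan_eq_span)
qed

lemma subspace_tpow2: "pm.subspace (tpow K 2)"
  by (simp add: tpow2_eq_span pm.subspace_span)

lemma tprod2_in_tpow2: "a \<in> K \<Longrightarrow> b \<in> K \<Longrightarrow> tprod [a, b] \<in> tpow K 2"
  by (auto simp: tpow2_eq_span intro: pm.span_base)

lemma tlift2_tpow2_closed:
  assumes "pm.subspace V" "bilin F" "\<And>a b. a \<in> K \<Longrightarrow> b \<in> K \<Longrightarrow> F a b \<in> V" "z \<in> tpow K 2"
  shows "tlift2 F z \<in> V"
  using assms(4) unfolding tpow2_eq_span
  by (rule linear_map_span_subset[OF linear_map_tlift2_comp[OF linear_map_id] assms(1), rotated])
    (auto simp: tlift2_tprod[OF assms(2)] assms(3))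

lemma subspace_in_tpow: "pm.subspace {x. in_tpow n x}"
  by (simp add: pm.subspace_def in_tpow_zero in_tpow_add in_tpow_sc)

lemma in_tpow_tpow2:
  assumes "z \<in> tpow K 2"
  shows "in_tpow 2 z"
proof -
  have "z \<in> {x. in_tpow 2 x}"
    using assms unfolding tpow2_eq_span
    by (rule linear_map_span_subset[OF linear_map_id subspace_in_tpow, rotated]) (auto intro: in_tpow_tprod)
  then show ?thesis by simp
qed

lemma tpow2_subset_span:
  assumes "K \<subseteq> pm.span F"
  shows "tpow K 2 \<subseteq> pm.span ((\<lambda>(a, b). tprod [a, b]) ` (F \<times> F))" (is "_ \<subseteq> pm.span ?T")
proof
  have tprod_in_span: "tprod [a, b] \<in> pm.span ?T" if "a \<in> pm.span F" "b \<in> pm.span F" for a b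
  proof (rule linear_map_span_subset[of "\<lambda>a. tprod [a, b]", OF _ pm.subspace_span _ that(1)])
    fix f assume "f \<in> F"
    show "tprod [f, b] \<in> pm.span ?T"
      by (rule linear_map_span_subset[of "\<lambda>b. tprod [f, b]", OF _ pm.subspace_span _ that(2)])
        (use \<open>f \<in> F\<close> in \<open>auto intro: pm.span_base simp: linear_map_intros\<close>)
  qed (simp add: linear_map_intros)
  fix z assume "z \<in> tpow K 2"
  then show "z \<in> pm.span ?T"
    using tlift2_tpow2_closed[OF pm.subspace_span bilin_tprod2 tprod_in_span] assms
    by (auto simp: tlift2_tprod_id in_tpow_tpow2)
qed

section \<open>Subquasibialgebras containing \<open>q\<^sub>L\<close>\<close>

locale quasi_hopf_subquasibialgebra = quasi_hopf_algebra +
  fixes K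
  assumes subquasibialgebra: "subquasibialgebra mult one Delta phi K"
    and finite_dimensional: "finite_dimensional K"
    and qL_mem: "lin_ext (\<lambda>u. tens (vec (mult (mult (S (bv (u!0))) alpha) (bv (u!1)))) (vec (bv (u!2)))) phinv
      \<in> tpow K 2"
begin

lemma subspace_K: "pm.subspace K"
  and one_in_K: "one \<in> K"
  and mult_in_K: "a \<in> K \<Longrightarrow> b \<in> K \<Longrightarrow> mult a b \<in> K"
  and Delta_in_tpow2: "a \<in> K \<Longrightarrow> Delta a \<in> tpow K 2"
  using subquasibialgebra by (simp_all add: subquasibialgebra_def pm.subspace_def)

lemma qL_in_tpow2: "qL \<in> tpow K 2"
  using qL_mem by (simp add: qL_def)

lemma mulT_tpow2_closed:
  assumes z1: "z1 \<in> tpow K 2" and z2: "z2 \<in> tpow K 2"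
  shows "mulT mult z1 z2 \<in> tpow K 2"
proof -
  have "mulT mult z1 z2 = tlift2 (\<lambda>a b. tprod [a, b]) (mulT mult z1 z2)"
    using in_tpow_mulT[OF in_tpow_tpow2[OF z1] in_tpow_tpow2[OF z2]] by (simp add: tlift2_tprod_id)
  also have "\<dots> = tlift2 (\<lambda>a b. tlift2 (\<lambda>a' b'. tprod [mult a a', mult b b']) z2) z1"
    by (rule tlift2_mulT[OF in_tpow_tpow2[OF z1] in_tpow_tpow2[OF z2] bilin_tprod2])
  also have "\<dots> \<in> tpow K 2"
  proof (rule tlift2_tpow2_closed[OF subspace_tpow2 _ _ z1])
    show "bilin (\<lambda>a b. tlift2 (\<lambda>a' b'. tprod [mult a a', mult b b']) z2)"
      by (intro bilinI) (simp_all add: linear_map_intros)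
    show "tlift2 (\<lambda>a' b'. tprod [mult a a', mult b b']) z2 \<in> tpow K 2" if "a \<in> K" "b \<in> K" for a b
      by (rule tlift2_tpow2_closed[OF subspace_tpow2 _ _ z2])
        (simp_all add: bilin_def linear_map_intros tprod2_in_tpow2 mult_in_K that)
  qed
  finally show ?thesis .
qed

lemma can_tpow2_closed: "w \<in> tpow K 2 \<Longrightarrow> can w \<in> tpow K 2"
  unfolding can_def
  by (rule tlift2_tpow2_closed[OF subspace_tpow2 _ _])
    (simp_all add: bilin_def linear_map_intros mulT_tpow2_closed tprod2_in_tpow2 one_in_K qL_in_tpow2 Delta_in_tpow2)

text \<open>This is where finite dimension enters: an injective endomorphism of \<open>K \<otimes> K\<close> is onto.\<close>
lemma can_linv_tpow2_closed:
  assumes "z \<in> tpow K 2"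
  shows "can_linv z \<in> tpow K 2"
proof -
  obtain F where F: "finite F" "K \<subseteq> pm.span F"
    using finite_dimensional by (auto simp: finite_dimensional_def lspan_eq_span)
  have "inj_on can (tpow K 2)"
    by (rule inj_on_inverseI[of _ can_linv]) (rule can_linv_can[OF in_tpow_tpow2])
  then have "can ` tpow K 2 = tpow K 2"
    using can_tpow2_closed
    by (intro linear_inj_on_imp_surj_on[OF subspace_tpow2 _ tpow2_subset_span[OF F(2)] can_linear]) (auto simp: F(1))
  then obtain w where "w \<in> tpow K 2" "z = can w"
    using assms by (metis imageE)
  then show ?thesis
    by (simp add: can_linv_can[OF in_tpow_tpow2])
qed

lemma alpha_in_K: "alpha \<in> K"
proof -
  have "tlift2 (\<lambda>a b. sc (eps b) a) qL \<in> K"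
    by (rule tlift2_tpow2_closed[OF subspace_K _ _ qL_in_tpow2])
      (simp_all add: bilin_def linear_map_intros pm.subspace_scale[OF subspace_K])
  then show ?thesis
    by (simp only: qL_counit_right)
qed

lemma beta_S_in_K:
  assumes "h \<in> K"
  shows "mult beta (S h) \<in> K"
proof -
  have "tlift2 (\<lambda>a b. sc (eps b) a) (can_linv (tprod [one, h])) \<in> K"
    by (rule tlift2_tpow2_closed[OF subspace_K _ _ can_linv_tpow2_closed[OF tprod2_in_tpow2[OF one_in_K assms]]])
      (simp_all add: bilin_def linear_map_intros pm.subspace_scale[OF subspace_K])
  then show ?thesis
    by (simp only: can_linv_counit_right)
qed

lemma beta_in_K: "beta \<in> K"
  using beta_S_in_K[OF one_in_K] by (simp add: S_one)

lemma S_in_K: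
  assumes "h \<in> K"
  shows "S h \<in> K"
proof -
  have "tlift2 (\<lambda>a b. mult a (mult beta (S (mult h b)))) qL \<in> K"
  proof (rule tlift2_tpow2_closed[OF subspace_K _ _ qL_in_tpow2])
    show "bilin (\<lambda>a b. mult a (mult beta (S (mult h b))))"
      by (intro bilinI) (simp_all add: linear_map_intros)
    show "mult a (mult beta (S (mult h b))) \<in> K" if "a \<in> K" "b \<in> K" for a b
      by (rule mult_in_K[OF that(1) beta_S_in_K[OF mult_in_K[OF assms that(2)]]])
  qed
  then show ?thesis
    by (simp only: qL_beta_S)
qed

end

theorem proposition2p3:
  fixes mult :: "('b,'k::field) hvec \<Rightarrow> ('b,'k) hvec \<Rightarrow> ('b,'k) hvec"
    and one :: "('b,'k) hvec"
    and Delta :: "('b,'k) hvec \<Rightarrow> ('b,'k) tens"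
    and eps :: "('b,'k) hvec \<Rightarrow> 'k"
    and phi phinv :: "('b,'k) tens"
    and S :: "('b,'k) hvec \<Rightarrow> ('b,'k) hvec"
    and alpha beta :: "('b,'k) hvec"
    and K :: "('b,'k) hvec set"
  assumes "quasi_hopf mult one Delta eps phi phinv S alpha beta"
    and "subquasibialgebra mult one Delta phi K"
    and "finite_dimensional K"
    and "lin_ext (\<lambda>u. tens (vec (mult (mult (S (bv (u!0))) alpha) (bv (u!1)))) (vec (bv (u!2)))) phinv
           \<in> tpow K 2"
  shows "alpha \<in> K \<and> beta \<in> K \<and> S ` K \<subseteq> K"
proof -
  interpret quasi_hopf_subquasibialgebra mult one Delta eps phi phinv S alpha beta K
    using assms by unfold_locales
  show ?thesis
    using alpha_in_K beta_in_K S_in_K by blast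
qed

end
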